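(* Fix widths $\mathbf{n}=(n_0,\dots,n_L)$, radial rescaling activations $\rho_i=h_i^{(n_i)}$, a finite batch of training data $\{(x_j,y_j)\}\subseteq\mathbb{R}^{n_0}\times\mathbb{R}^{n_L}$, a cost function $\mathcal C:\mathbb{R}^{n_L}\times\mathbb{R}^{n_L}\to\mathbb{R}$ and a learning rate $\eta>0$, and let $\mathcal L,\mathcal L_{\rm red},\gamma,\gamma_{\rm red},\gamma_{\rm proj}$ be as in the context. Let $(\mathbf{W},\mathbf{b})\in\mathsf{Param}(\mathbf{n})$ and let $\mathbf{W}^{\rm red},\mathbf{b}^{\rm red},\mathbf{Q}$ be the outputs of the QR compression algorithm applied to $(\mathbf{W},\mathbf{b})$. Set $\mathbf{U}=\mathbf{Q}^{-1}\cdot(\mathbf{W},\mathbf{b})-\iota(\mathbf{W}^{\rm red},\mathbf{b}^{\rm red})$. Then for every integer $k\ge0$: $$\gamma^k(\mathbf{W},\mathbf{b})=\mathbf{Q}\cdot\gamma^k\big(\mathbf{Q}^{-1}\cdot(\mathbf{W},\mathbf{b})\big),\qquad \gamma_{\rm proj}^k\big(\mathbf{Q}^{-1}\cdot(\mathbf{W},\mathbf{b})\big)=\iota\big(\gamma_{\rm red}^k(\mathbf{W}^{\rm red},\mathbf{b}^{\rm red})\big)+\mathbf{U}.$$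
   Context: Radial rescaling: for $h:\mathbb{R}\to\mathbb{R}$ piecewise differentiable, $h^{(n)}(v)=h(|v|)v/|v|$ ($v\ne0$), $h^{(n)}(0)=0$. $\mathsf{Param}(\mathbf{n})=\prod_{i=1}^L\mathbb{R}^{n_i\times n_{i-1}}\times\prod_{i=1}^L\mathbb{R}^{n_i}$, with elements $(\mathbf{W},\mathbf{b})$, $\mathbf{W}=(W_i)$, $\mathbf{b}=(b_i)$. The feedforward function $F_{(\mathbf{W},\mathbf{b},\boldsymbol\rho)}=F_L$ with $F_0=\mathrm{id}$, $F_i(x)=\rho_i(W_iF_{i-1}(x)+b_i)$. Loss: $\mathcal L(\mathbf{W},\mathbf{b})=\sum_j\mathcal C(F_{(\mathbf{W},\mathbf{b},\boldsymbol\rho)}(x_j),y_j)$; the loss functions are assumed differentiable so that gradients exist. Reduced widths: $n^{\rm red}_0=n_0$, $n^{\rm red}_i=\min(n_i,n^{\rm red}_{i-1}+1)$ for $1\le i\le L-1$, $n^{\rm red}_L=n_L$. $\mathbb{R}^k\subseteq\mathbb{R}^n$ via the first $k$ coordinates; $\rho^{\rm red}_i=h_i^{(n^{\rm red}_i)}$ is the restriction of $\rho_i$. $\mathcal L_{\rm red}$ on $\mathsf{Param}(\mathbf{n}^{\rm red})$ is defined the same way using activations $\rho^{\rm red}_i$. Gradient descent: $\gamma(\mathbf{W},\mathbf{b})=(\mathbf{W},\mathbf{b})-\eta\nabla_{(\mathbf{W},\mathbf{b})}\mathcal L$ on $\mathsf{Param}(\mathbf{n})$, $\gamma_{\rm red}(\mathbf{V},\mathbf{c})=(\mathbf{V},\mathbf{c})-\eta\nabla_{(\mathbf{V},\mathbf{c})}\mathcal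 L_{\rm red}$ on $\mathsf{Param}(\mathbf{n}^{\rm red})$; $\gamma^k$ is the $k$-fold composition. Projected gradient descent: $\gamma_{\rm proj}(\mathbf{W},\mathbf{b})=\mathrm{Proj}(\gamma(\mathbf{W},\mathbf{b}))$, where $\mathrm{Proj}$ sets to zero, for each $i$, the bottom-left $(n_i-n^{\rm red}_i)\times n^{\rm red}_{i-1}$ submatrix of the weight matrix and the bottom $n_i-n^{\rm red}_i$ entries of the bias vector. $\iota:\mathsf{Param}(\mathbf{n}^{\rm red})\hookrightarrow\mathsf{Param}(\mathbf{n})$ places each matrix/vector in the top-left corner, padding with zeros. Action: $\mathbf{Q}=(Q_1,\dots,Q_{L-1})\in O(n_1)\times\dots\times O(n_{L-1})$ acts by $\mathbf{Q}\cdot(\mathbf{W},\mathbf{b})=((Q_iW_iQ_{i-1}^{-1})_i,(Q_ib_i)_i)$ with $Q_0=\mathrm{id}_{n_0}$, $Q_L=\mathrm{id}_{n_L}$. QR compression algorithm: $A_1=[\,b_1\ W_1\,]$; for $i=1,\dots,L-1$, take a complete QR decomposition $A_i=Q_i\mathrm{Inc}_iR_i$ ($Q_i\in O(n_i)$, $R_i$ upper triangular $n^{\rm red}_i\times(1+n^{\rm red}_{i-1})$, $\mathrm{Inc}_i\in\mathbb{R}^{n_i\times n^{\rm red}_i}$ ones on the main diagonal, zeros elsewhere); $b^{\rm red}_i$ = first column of $R_i$, $W^{\rm red}_i$ = remaining columns; $A_{i+1}=[\,b_{i+1}\ W_{i+1}Q_i\mathrm{Inc}_i\,]$. Finally $b^{\rm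 red}_L,W^{\rm red}_L$ are the first column and the remaining columns of $A_L$. Outputs $\mathbf{Q}=(Q_i)$, $\mathbf{W}^{\rm red},\mathbf{b}^{\rm red}$. *)

theory Defs
  imports Complex_Main "Jordan_Normal_Form.Matrix"
begin

text \<open>A parameter (W,b) is a pair of lists of length L: the list entry with index i-1
  is W_i (an n_i x n_{i-1} real matrix) resp. b_i (a vector in R^{n_i}).\<close>

type_synonym param = "real mat list \<times> real vec list"

definition nlayers :: "nat list \<Rightarrow> nat" where
  "nlayers ns = length ns - 1"

definition Param :: "nat list \<Rightarrow> param set" where
  "Param ns = {(Ws, bs). length Ws = nlayers ns \<and> length bs = nlayers ns \<and>
      (\<forall>i < nlayers ns. Ws ! i \<in> carrier_mat (ns ! Suc i) (ns ! i) \<and>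
                         bs ! i \<in> carrier_vec (ns ! Suc i))}"

definition padd :: "param \<Rightarrow> param \<Rightarrow> param" where
  "padd p q = (map2 (+) (fst p) (fst q), map2 (+) (snd p) (snd q))"

definition psub :: "param \<Rightarrow> param \<Rightarrow> param" where
  "psub p q = (map2 (-) (fst p) (fst q), map2 (-) (snd p) (snd q))"

definition psmult :: "real \<Rightarrow> param \<Rightarrow> param" where
  "psmult a p = (map (\<lambda>W. a \<cdot>\<^sub>m W) (fst p), map (\<lambda>b. a \<cdot>\<^sub>v b) (snd p))"

definition pinner :: "param \<Rightarrow> param \<Rightarrow> real" where
  "pinner p q =
     (\<Sum>i<length (fst p). \<Sum>r<dim_row (fst p ! i). \<Sum>c<dim_col (fst p ! i).
         (fst p ! i) $$ (r, c) * (fst q ! i) $$ (r, c))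
   + (\<Sum>i<length (snd p). \<Sum>r<dim_vec (snd p ! i). (snd p ! i) $ r * (snd q ! i) $ r)"

definition pnorm :: "param \<Rightarrow> real" where
  "pnorm p = sqrt (pinner p p)"

definition has_grad :: "(param \<Rightarrow> real) \<Rightarrow> nat list \<Rightarrow> param \<Rightarrow> param \<Rightarrow> bool" where
  "has_grad f ns p g \<longleftrightarrow> g \<in> Param ns \<and>
     (\<forall>\<epsilon>>0. \<exists>\<delta>>0. \<forall>q\<in>Param ns. pnorm q < \<delta> \<longrightarrow>
        \<bar>f (padd p q) - f p - pinner g q\<bar> \<le> \<epsilon> * pnorm q)"

definition grad :: "(param \<Rightarrow> real) \<Rightarrow> nat list \<Rightarrow> param \<Rightarrow> param" where
  "grad f ns p = (THE g. has_grad f ns p g)"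

definition differentiable_on_Param :: "(param \<Rightarrow> real) \<Rightarrow> nat list \<Rightarrow> bool" where
  "differentiable_on_Param f ns \<longleftrightarrow> (\<forall>p\<in>Param ns. \<exists>g. has_grad f ns p g)"

definition vnorm :: "real vec \<Rightarrow> real" where
  "vnorm v = sqrt (v \<bullet> v)"

definition radial :: "(real \<Rightarrow> real) \<Rightarrow> real vec \<Rightarrow> real vec" where
  "radial h v = (if v = 0\<^sub>v (dim_vec v) then 0\<^sub>v (dim_vec v)
                 else (h (vnorm v) / vnorm v) \<cdot>\<^sub>v v)"

definition piecewise_differentiable :: "(real \<Rightarrow> real) \<Rightarrow> bool" where
  "piecewise_differentiable h \<longleftrightarrow>
     (\<exists>S. finite S \<and> (\<forall>t. t \<notin> S \<longrightarrow> h differentiable (at t)))"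

text \<open>ff h i Ws bs x: apply layers i, i+1, ... ; layer j uses activation radial (h j).
  F_{(W,b,rho)} (x) = ff h 1 Ws bs x.\<close>
fun ff :: "(nat \<Rightarrow> real \<Rightarrow> real) \<Rightarrow> nat \<Rightarrow> real mat list \<Rightarrow> real vec list \<Rightarrow> real vec \<Rightarrow> real vec" where
  "ff h i (W # Ws) (b # bs) x = ff h (Suc i) Ws bs (radial (h i) (W *\<^sub>v x + b))"
| "ff h i _ _ x = x"

definition feedforward :: "(nat \<Rightarrow> real \<Rightarrow> real) \<Rightarrow> param \<Rightarrow> real vec \<Rightarrow> real vec" where
  "feedforward h p x = ff h 1 (fst p) (snd p) x"

definition loss :: "(nat \<Rightarrow> real \<Rightarrow> real) \<Rightarrow> (real vec \<Rightarrow> real vec \<Rightarrow> real)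
    \<Rightarrow> (real vec \<times> real vec) list \<Rightarrow> param \<Rightarrow> real" where
  "loss h C D p = (\<Sum>(x, y) \<leftarrow> D. C (feedforward h p x) y)"

definition gd_step :: "(param \<Rightarrow> real) \<Rightarrow> real \<Rightarrow> nat list \<Rightarrow> param \<Rightarrow> param" where
  "gd_step f \<eta> ns p = psub p (psmult \<eta> (grad f ns p))"

fun rw :: "nat list \<Rightarrow> nat \<Rightarrow> nat" where
  "rw ns 0 = ns ! 0"
| "rw ns (Suc i) = min (ns ! Suc i) (rw ns i + 1)"

definition red_widths :: "nat list \<Rightarrow> nat list" where
  "red_widths ns = map (\<lambda>i. if i = nlayers ns then ns ! i else rw ns i) [0..<length ns]"

definition embed :: "nat list \<Rightarrow> param \<Rightarrow> param" where
  "embed ns p = (let nr = red_widths ns in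
     (map (\<lambda>i. mat (ns ! Suc i) (ns ! i) (\<lambda>(r, c).
                  if r < nr ! Suc i \<and> c < nr ! i then (fst p ! i) $$ (r, c) else 0))
          [0..<nlayers ns],
      map (\<lambda>i. vec (ns ! Suc i) (\<lambda>r. if r < nr ! Suc i then (snd p ! i) $ r else 0))
          [0..<nlayers ns]))"

definition proj :: "nat list \<Rightarrow> param \<Rightarrow> param" where
  "proj ns p = (let nr = red_widths ns in
     (map (\<lambda>i. let W = fst p ! i in mat (dim_row W) (dim_col W) (\<lambda>(r, c).
                  if nr ! Suc i \<le> r \<and> c < nr ! i then 0 else W $$ (r, c)))
          [0..<length (fst p)],
      map (\<lambda>i. let b = snd p ! i in vec (dim_vec b) (\<lambda>r. if nr ! Suc i \<le> r then 0 else b $ r))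
          [0..<length (snd p)]))"

definition pgd_step :: "(param \<Rightarrow> real) \<Rightarrow> real \<Rightarrow> nat list \<Rightarrow> param \<Rightarrow> param" where
  "pgd_step f \<eta> ns p = proj ns (gd_step f \<eta> ns p)"

definition orth_mat :: "nat \<Rightarrow> real mat \<Rightarrow> bool" where
  "orth_mat n Q \<longleftrightarrow> Q \<in> carrier_mat n n \<and> Q * transpose_mat Q = 1\<^sub>m n \<and> transpose_mat Q * Q = 1\<^sub>m n"

text \<open>Q i for 1 \<le> i \<le> L-1; Q_0 and Q_L are the identities. For Q in O(n), Q^{-1} = Q^T.\<close>
definition Qext :: "nat list \<Rightarrow> (nat \<Rightarrow> real mat) \<Rightarrow> nat \<Rightarrow> real mat" where
  "Qext ns Q i = (if i = 0 \<or> i = nlayers ns then 1\<^sub>m (ns ! i) else Q i)"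

definition act :: "nat list \<Rightarrow> (nat \<Rightarrow> real mat) \<Rightarrow> param \<Rightarrow> param" where
  "act ns Q p =
     (map (\<lambda>i. Qext ns Q (Suc i) * (fst p ! i) * transpose_mat (Qext ns Q i)) [0..<length (fst p)],
      map (\<lambda>i. Qext ns Q (Suc i) *\<^sub>v (snd p ! i)) [0..<length (snd p)])"

definition act_inv :: "nat list \<Rightarrow> (nat \<Rightarrow> real mat) \<Rightarrow> param \<Rightarrow> param" where
  "act_inv ns Q p = act ns (\<lambda>i. transpose_mat (Q i)) p"

definition aug :: "real vec \<Rightarrow> real mat \<Rightarrow> real mat" where
  "aug b W = mat (dim_row W) (Suc (dim_col W)) (\<lambda>(r, c). if c = 0 then b $ r else W $$ (r, c - 1))"

definition Inc :: "nat \<Rightarrow> nat \<Rightarrow> real mat" where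
  "Inc n m = mat n m (\<lambda>(r, c). if r = c then 1 else 0)"

text \<open>qrA ns p Q i = A_i (for i \<ge> 1): A_1 = [b_1 W_1], A_{i+1} = [b_{i+1}  W_{i+1} Q_i Inc_i].\<close>
fun qrA :: "nat list \<Rightarrow> param \<Rightarrow> (nat \<Rightarrow> real mat) \<Rightarrow> nat \<Rightarrow> real mat" where
  "qrA ns p Q 0 = 0\<^sub>m 0 0"
| "qrA ns p Q (Suc 0) = aug (snd p ! 0) (fst p ! 0)"
| "qrA ns p Q (Suc (Suc k)) =
     aug (snd p ! Suc k) (fst p ! Suc k * Q (Suc k) * Inc (ns ! Suc k) (red_widths ns ! Suc k))"

text \<open>(Wred, bred) and Q are outputs of the QR compression algorithm applied to p,
  for some choice of complete QR decompositions A_i = Q_i Inc_i R_i.\<close>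
definition qr_outputs :: "nat list \<Rightarrow> param \<Rightarrow> (nat \<Rightarrow> real mat) \<Rightarrow> param \<Rightarrow> bool" where
  "qr_outputs ns p Q pr \<longleftrightarrow>
     (let L = nlayers ns; nr = red_widths ns in
      length (fst pr) = L \<and> length (snd pr) = L \<and>
      (\<exists>R :: nat \<Rightarrow> real mat. \<forall>i. 1 \<le> i \<and> i \<le> L - 1 \<longrightarrow>
          orth_mat (ns ! i) (Q i) \<and>
          R i \<in> carrier_mat (nr ! i) (1 + nr ! (i - 1)) \<and> upper_triangular (R i) \<and>
          qrA ns p Q i = Q i * Inc (ns ! i) (nr ! i) * R i \<and>
          snd pr ! (i - 1) = col (R i) 0 \<and>
          fst pr ! (i - 1) = mat (nr ! i) (nr ! (i - 1)) (\<lambda>(r, c). R i $$ (r, Suc c))) \<and>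
      snd pr ! (L - 1) = col (qrA ns p Q L) 0 \<and>
      fst pr ! (L - 1) = mat (dim_row (qrA ns p Q L)) (dim_col (qrA ns p Q L) - 1)
                             (\<lambda>(r, c). qrA ns p Q L $$ (r, Suc c)))"

end

theory Submission
  imports Defs
begin

text \<open>The orthogonal action commutes with radial rescaling activations, so it leaves the
  feedforward function, and hence the loss, invariant. Being moreover an isometry of the
  parameter space, it maps gradients to gradients, and gradient descent commutes with it.

  The QR compression algorithm is built so that every layer of \<open>act_inv ns Q p\<close> maps the span of
  the first \<open>red_widths ns ! i\<close> coordinates into that of the first \<open>red_widths ns ! Suc i\<close>
  coordinates and acts there as the corresponding layer of the reduced network. A parameter with
  this property computes the same function as its reduced part, and moving both along compatible
  directions preserves the property, so the directional derivatives of the full and the reduced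
  loss agree. Hence the projected gradient is the embedded reduced gradient; the columns beyond
  the reduced widths only ever meet zero inputs and get zero gradient. Projected gradient descent
  therefore moves the reduced part exactly as reduced gradient descent does and never moves
  \<open>U\<close>.\<close>

lemma ParamD:
  assumes "p \<in> Param ns"
  shows "length (fst p) = nlayers ns" "length (snd p) = nlayers ns"
    and "i < nlayers ns \<Longrightarrow> fst p ! i \<in> carrier_mat (ns ! Suc i) (ns ! i)"
    and "i < nlayers ns \<Longrightarrow> snd p ! i \<in> carrier_vec (ns ! Suc i)"
  using assms by (auto simp: Param_def)

lemma Param_dims:
  assumes "p \<in> Param ns" "i < nlayers ns"
  shows "dim_row (fst p ! i) = ns ! Suc i" "dim_col (fst p ! i) = ns ! i"
    and "dim_vec (snd p ! i) = ns ! Suc i"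
  using ParamD[OF assms(1)] assms(2) by auto

lemma ParamI:
  assumes "length (fst p) = nlayers ns" "length (snd p) = nlayers ns"
    and "\<And>i. i < nlayers ns \<Longrightarrow> fst p ! i \<in> carrier_mat (ns ! Suc i) (ns ! i)"
    and "\<And>i. i < nlayers ns \<Longrightarrow> snd p ! i \<in> carrier_vec (ns ! Suc i)"
  shows "p \<in> Param ns"
  using assms by (cases p) (auto simp: Param_def)

lemma param_eqI:
  assumes p: "p \<in> Param ns" and q: "q \<in> Param ns"
    and W: "\<And>i a c. i < nlayers ns \<Longrightarrow> a < ns ! Suc i \<Longrightarrow> c < ns ! i \<Longrightarrow>
               fst p ! i $$ (a, c) = fst q ! i $$ (a, c)"
    and b: "\<And>i a. i < nlayers ns \<Longrightarrow> a < ns ! Suc i \<Longrightarrow> snd p ! i $ a = snd q ! i $ a"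
  shows "p = q"
proof -
  have "fst p = fst q"
    by (rule nth_equalityI)
      (use ParamD[OF p] ParamD[OF q] W in \<open>auto simp: Param_dims[OF p] Param_dims[OF q]\<close>)
  moreover have "snd p = snd q"
    by (rule nth_equalityI)
      (use ParamD[OF p] ParamD[OF q] b in \<open>auto simp: Param_dims[OF p] Param_dims[OF q]\<close>)
  ultimately show ?thesis
    by (simp add: prod_eq_iff)
qed

lemma param_eq_nthI:
  assumes "p \<in> Param ns" "q \<in> Param ns"
    and "\<And>i. i < nlayers ns \<Longrightarrow> fst p ! i = fst q ! i"
    and "\<And>i. i < nlayers ns \<Longrightarrow> snd p ! i = snd q ! i"
  shows "p = q"
  using assms by (intro param_eqI[OF assms(1,2)]) auto

lemma nth_padd:
  assumes "p \<in> Param ns" "q \<in> Param ns" "i < nlayers ns"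
  shows "fst (padd p q) ! i = fst p ! i + fst q ! i" "snd (padd p q) ! i = snd p ! i + snd q ! i"
  using assms by (auto simp: padd_def ParamD)

lemma nth_psub:
  assumes "p \<in> Param ns" "q \<in> Param ns" "i < nlayers ns"
  shows "fst (psub p q) ! i = fst p ! i - fst q ! i" "snd (psub p q) ! i = snd p ! i - snd q ! i"
  using assms by (auto simp: psub_def ParamD)

lemma nth_psmult:
  assumes "p \<in> Param ns" "i < nlayers ns"
  shows "fst (psmult t p) ! i = t \<cdot>\<^sub>m fst p ! i" "snd (psmult t p) ! i = t \<cdot>\<^sub>v snd p ! i"
  using assms by (auto simp: psmult_def ParamD)

lemma padd_Param: "p \<in> Param ns \<Longrightarrow> q \<in> Param ns \<Longrightarrow> padd p q \<in> Param ns"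
  by (rule ParamI) (auto simp: nth_padd ParamD, auto simp: padd_def ParamD)

lemma psub_Param: "p \<in> Param ns \<Longrightarrow> q \<in> Param ns \<Longrightarrow> psub p q \<in> Param ns"
  by (rule ParamI) (auto simp: nth_psub ParamD minus_carrier_mat, auto simp: psub_def ParamD)

lemma psmult_Param: "p \<in> Param ns \<Longrightarrow> psmult t p \<in> Param ns"
  by (rule ParamI) (auto simp: nth_psmult ParamD, auto simp: psmult_def ParamD)

lemma index_padd:
  assumes "p \<in> Param ns" "q \<in> Param ns" "i < nlayers ns" "a < ns ! Suc i"
  shows "c < ns ! i \<Longrightarrow> fst (padd p q) ! i $$ (a, c) = fst p ! i $$ (a, c) + fst q ! i $$ (a, c)"
    and "snd (padd p q) ! i $ a = snd p ! i $ a + snd q ! i $ a"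
  using assms by (auto simp: nth_padd Param_dims)

lemma index_psub:
  assumes "p \<in> Param ns" "q \<in> Param ns" "i < nlayers ns" "a < ns ! Suc i"
  shows "c < ns ! i \<Longrightarrow> fst (psub p q) ! i $$ (a, c) = fst p ! i $$ (a, c) - fst q ! i $$ (a, c)"
    and "snd (psub p q) ! i $ a = snd p ! i $ a - snd q ! i $ a"
  using assms by (auto simp: nth_psub Param_dims)

lemma index_psmult:
  assumes "p \<in> Param ns" "i < nlayers ns" "a < ns ! Suc i"
  shows "c < ns ! i \<Longrightarrow> fst (psmult t p) ! i $$ (a, c) = t * fst p ! i $$ (a, c)"
    and "snd (psmult t p) ! i $ a = t * snd p ! i $ a"
  using assms by (auto simp: nth_psmult Param_dims)

definition pzero :: "nat list \<Rightarrow> param" where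
  "pzero ns = (map (\<lambda>i. 0\<^sub>m (ns ! Suc i) (ns ! i)) [0..<nlayers ns],
               map (\<lambda>i. 0\<^sub>v (ns ! Suc i)) [0..<nlayers ns])"

definition unit_weight :: "nat list \<Rightarrow> nat \<Rightarrow> nat \<Rightarrow> nat \<Rightarrow> param" where
  "unit_weight ns i a c =
     (map (\<lambda>j. mat (ns ! Suc j) (ns ! j) (\<lambda>(x, y). if j = i \<and> x = a \<and> y = c then 1 else 0))
        [0..<nlayers ns],
      map (\<lambda>j. 0\<^sub>v (ns ! Suc j)) [0..<nlayers ns])"

definition unit_bias :: "nat list \<Rightarrow> nat \<Rightarrow> nat \<Rightarrow> param" where
  "unit_bias ns i a =
     (map (\<lambda>j. 0\<^sub>m (ns ! Suc j) (ns ! j)) [0..<nlayers ns],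
      map (\<lambda>j. vec (ns ! Suc j) (\<lambda>x. if j = i \<and> x = a then 1 else 0)) [0..<nlayers ns])"

lemma pzero_Param: "pzero ns \<in> Param ns"
  by (rule ParamI) (auto simp: pzero_def)

lemma unit_weight_Param: "unit_weight ns i a c \<in> Param ns"
  by (rule ParamI) (auto simp: unit_weight_def)

lemma unit_bias_Param: "unit_bias ns i a \<in> Param ns"
  by (rule ParamI) (auto simp: unit_bias_def)

definition frob_inner :: "real mat \<Rightarrow> real mat \<Rightarrow> real" where
  "frob_inner A B = (\<Sum>r<dim_row A. \<Sum>c<dim_col A. A $$ (r, c) * B $$ (r, c))"

lemma pinner_Param:
  assumes "p \<in> Param ns" "q \<in> Param ns"
  shows "pinner p q = (\<Sum>i<nlayers ns. frob_inner (fst p ! i) (fst q ! i))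
                    + (\<Sum>i<nlayers ns. snd p ! i \<bullet> snd q ! i)"
  unfolding pinner_def frob_inner_def
  using ParamD(1,2)[OF assms(1)]
  by (auto simp: scalar_prod_def lessThan_atLeast0 Param_dims[OF assms(1)] Param_dims[OF assms(2)]
      intro!: sum.cong arg_cong2[where f = "(+)"])

lemma pinner_psmult_right:
  assumes "p \<in> Param ns" "u \<in> Param ns"
  shows "pinner p (psmult t u) = t * pinner p u"
  using assms by (simp add: pinner_Param psmult_Param nth_psmult frob_inner_def scalar_prod_def
      Param_dims sum_distrib_left distrib_left mult_ac)

lemma pnorm_psmult:
  assumes "u \<in> Param ns"
  shows "pnorm (psmult t u) = \<bar>t\<bar> * pnorm u"
proof -
  have "pinner (psmult t u) (psmult t u) = t\<^sup>2 * pinner u u"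
    using assms
    by (simp add: pinner_Param[OF psmult_Param[OF assms] psmult_Param[OF assms]]
        pinner_Param[OF assms assms] nth_psmult frob_inner_def scalar_prod_def Param_dims
        sum_distrib_left distrib_left mult_ac power2_eq_square)
  then show ?thesis
    by (simp add: pnorm_def real_sqrt_mult)
qed

lemma pnorm_nonneg: "pnorm u \<ge> 0"
  unfolding pnorm_def pinner_def by (intro real_sqrt_ge_zero add_nonneg_nonneg sum_nonneg) auto

lemma has_grad_line_tendsto:
  assumes g: "has_grad f ns p g" and u: "u \<in> Param ns"
  shows "((\<lambda>t. (f (padd p (psmult t u)) - f p) / t) \<longlongrightarrow> pinner g u) (at_right 0)"
proof (rule tendstoI)
  fix e :: real assume e: "e > 0"
  define N where "N = pnorm u + 1"
  have N: "N > 0" "pnorm u < N" using pnorm_nonneg[of u] by (auto simp: N_def)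
  obtain \<delta> where \<delta>: "\<delta> > 0" and bound: "\<And>q. q \<in> Param ns \<Longrightarrow> pnorm q < \<delta> \<Longrightarrow>
      \<bar>f (padd p q) - f p - pinner g q\<bar> \<le> e / (2 * N) * pnorm q"
    using g e N unfolding has_grad_def by (metis divide_pos_pos mult_pos_pos zero_less_numeral)
  have "\<forall>\<^sub>F t in at_right 0. t \<in> {0<..<\<delta> / N}"
    by (rule eventually_at_right_real) (use \<delta> N in simp)
  then show "\<forall>\<^sub>F t in at_right 0. dist ((f (padd p (psmult t u)) - f p) / t) (pinner g u) < e"
  proof (rule eventually_mono)
    fix t :: real assume t: "t \<in> {0<..<\<delta> / N}"
    have norm_tu: "pnorm (psmult t u) = t * pnorm u"
      using pnorm_psmult[OF u] t by simp
    have tu: "t * pnorm u < t * N"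
      using t N by simp
    also have "\<dots> < \<delta>"
      using t N by (simp add: field_simps)
    finally have "t * pnorm u < \<delta>" .
    then have "\<bar>f (padd p (psmult t u)) - f p - pinner g (psmult t u)\<bar> \<le> e / (2 * N) * (t * pnorm u)"
      using bound[OF psmult_Param[OF u], of t] norm_tu by simp
    then have "\<bar>f (padd p (psmult t u)) - f p - t * pinner g u\<bar> \<le> e / (2 * N) * (t * pnorm u)"
      using pinner_psmult_right[OF _ u] g by (simp add: has_grad_def)
    also have "\<dots> < e / (2 * N) * (t * N)"
      by (rule mult_strict_left_mono[OF tu]) (use e N in simp)
    also have "\<dots> < e * t"
      using e t N by (simp add: field_simps)
    finally have "\<bar>f (padd p (psmult t u)) - f p - t * pinner g u\<bar> / t < e"
      using t by (simp add: pos_divide_less_eq)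
    moreover have "(f (padd p (psmult t u)) - f p) / t - pinner g u
        = (f (padd p (psmult t u)) - f p - t * pinner g u) / t"
      using t by (simp add: field_simps)
    ultimately show "dist ((f (padd p (psmult t u)) - f p) / t) (pinner g u) < e"
      using t by (simp add: dist_real_def)
  qed
qed

lemma has_grad_pinner_eq:
  assumes g: "has_grad f ns p g" and g': "has_grad f' ns' p' g'"
    and u: "u \<in> Param ns" and u': "u' \<in> Param ns'"
    and "f p = f' p'" and "\<And>t. f (padd p (psmult t u)) = f' (padd p' (psmult t u'))"
  shows "pinner g u = pinner g' u'"
proof (rule tendsto_unique[OF trivial_limit_at_right_real has_grad_line_tendsto[OF g u]])
  show "((\<lambda>t. (f (padd p (psmult t u)) - f p) / t) \<longlongrightarrow> pinner g' u') (at_right 0)"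
    using has_grad_line_tendsto[OF g' u'] assms(5,6) by simp
qed

lemma mult_if_one_zero: "(r :: real) * (if P then 1 else 0) = (if P then r else 0)"
  by simp

lemma sum_sum_mult_indicator:
  fixes G :: "real mat"
  assumes "a < m" "c < n"
  shows "(\<Sum>x<m. \<Sum>y<n. G $$ (x, y) * (if x = a \<and> y = c then 1 else 0)) = G $$ (a, c)"
proof -
  have "(\<Sum>y<n. G $$ (x, y) * (if x = a \<and> y = c then 1 else 0)) = (if x = a then G $$ (a, c) else 0)" for x
    using assms by (cases "x = a") (simp_all add: mult_if_one_zero)
  then show ?thesis
    using assms by simp
qed

lemma pinner_unit_weight:
  assumes g: "g \<in> Param ns" and i: "i < nlayers ns" and a: "a < ns ! Suc i" and c: "c < ns ! i"
  shows "pinner g (unit_weight ns i a c) = fst g ! i $$ (a, c)"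
proof -
  have "frob_inner (fst g ! j) (fst (unit_weight ns i a c) ! j) = (if j = i then fst g ! i $$ (a, c) else 0)"
    if "j < nlayers ns" for j
    using that a c sum_sum_mult_indicator[OF a c, of "fst g ! i"]
    by (auto simp: frob_inner_def unit_weight_def Param_dims[OF g])
  then show ?thesis
    using i ParamD(4)[OF g] unfolding pinner_Param[OF g unit_weight_Param] by (simp add: unit_weight_def)
qed

lemma pinner_unit_bias:
  assumes g: "g \<in> Param ns" and i: "i < nlayers ns" and a: "a < ns ! Suc i"
  shows "pinner g (unit_bias ns i a) = snd g ! i $ a"
proof -
  have "snd g ! j \<bullet> snd (unit_bias ns i a) ! j = (if j = i then snd g ! i $ a else 0)"
    if "j < nlayers ns" for j
    using that a by (auto simp: scalar_prod_def unit_bias_def Param_dims[OF g] mult_if_one_zero)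
  then show ?thesis
    using i unfolding pinner_Param[OF g unit_bias_Param]
    by (simp add: unit_bias_def frob_inner_def Param_dims[OF g])
qed

lemma pinner_pzero: "g \<in> Param ns \<Longrightarrow> pinner g (pzero ns) = 0"
  unfolding pinner_Param[OF _ pzero_Param] by (simp add: pzero_def frob_inner_def Param_dims ParamD(4))

lemma has_grad_unique:
  assumes g1: "has_grad f ns p g1" and g2: "has_grad f ns p g2"
  shows "g1 = g2"
proof -
  have G: "g1 \<in> Param ns" "g2 \<in> Param ns"
    using g1 g2 by (auto simp: has_grad_def)
  show ?thesis
  proof (rule param_eqI[OF G])
    fix i a c assume "i < nlayers ns" "a < ns ! Suc i" "c < ns ! i"
    moreover have "pinner g1 (unit_weight ns i a c) = pinner g2 (unit_weight ns i a c)"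
      by (rule has_grad_pinner_eq[OF g1 g2 unit_weight_Param unit_weight_Param]) simp_all
    ultimately show "fst g1 ! i $$ (a, c) = fst g2 ! i $$ (a, c)"
      by (simp add: pinner_unit_weight G)
  next
    fix i a assume "i < nlayers ns" "a < ns ! Suc i"
    moreover have "pinner g1 (unit_bias ns i a) = pinner g2 (unit_bias ns i a)"
      by (rule has_grad_pinner_eq[OF g1 g2 unit_bias_Param unit_bias_Param]) simp_all
    ultimately show "snd g1 ! i $ a = snd g2 ! i $ a"
      by (simp add: pinner_unit_bias G)
  qed
qed

lemma grad_eqI: "has_grad f ns p g \<Longrightarrow> grad f ns p = g"
  unfolding grad_def using has_grad_unique by blast

lemma has_grad_grad:
  "differentiable_on_Param f ns \<Longrightarrow> p \<in> Param ns \<Longrightarrow> has_grad f ns p (grad f ns p)"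
  unfolding differentiable_on_Param_def using grad_eqI by metis

lemma grad_Param: "differentiable_on_Param f ns \<Longrightarrow> p \<in> Param ns \<Longrightarrow> grad f ns p \<in> Param ns"
  using has_grad_grad has_grad_def by blast

lemma gd_step_Param:
  "differentiable_on_Param f ns \<Longrightarrow> p \<in> Param ns \<Longrightarrow> gd_step f \<eta> ns p \<in> Param ns"
  unfolding gd_step_def by (intro psub_Param psmult_Param grad_Param)

lemma funpow_gd_step_Param:
  "differentiable_on_Param f ns \<Longrightarrow> p \<in> Param ns \<Longrightarrow> (gd_step f \<eta> ns ^^ k) p \<in> Param ns"
  by (induction k) (auto simp: gd_step_Param)

section \<open>The orthogonal action\<close>

lemma orth_matD:
  assumes "orth_mat n Q"
  shows "Q \<in> carrier_mat n n" "Q * transpose_mat Q = 1\<^sub>m n" "transpose_mat Q * Q = 1\<^sub>m n"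
  using assms by (auto simp: orth_mat_def)

lemma scalar_prod_mult_isometry:
  fixes M :: "real mat"
  assumes M: "M \<in> carrier_mat n m" "transpose_mat M * M = 1\<^sub>m m"
    and v: "v \<in> carrier_vec m" and w: "w \<in> carrier_vec m"
  shows "(M *\<^sub>v v) \<bullet> (M *\<^sub>v w) = v \<bullet> w"
proof -
  have "(M *\<^sub>v v) \<bullet> (M *\<^sub>v w) = (transpose_mat M *\<^sub>v (M *\<^sub>v w)) \<bullet> v"
    using transpose_vec_mult_scalar[OF M(1) v] M v w by (simp add: comm_scalar_prod[of _ n])
  also have "transpose_mat M *\<^sub>v (M *\<^sub>v w) = w"
    using M w by (simp flip: assoc_mult_mat_vec)
  finally show ?thesis
    using v w by (simp add: comm_scalar_prod[of _ m])
qed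

lemma sandwich_add:
  fixes A X Y B :: "real mat"
  assumes "A \<in> carrier_mat n' n'" "X \<in> carrier_mat n' n" "Y \<in> carrier_mat n' n" "B \<in> carrier_mat n n"
  shows "A * (X + Y) * B = A * X * B + A * Y * B"
  using assms by (simp add: mult_add_distrib_mat[of _ n' n'] add_mult_distrib_mat[of _ n' n])

lemma sandwich_minus:
  fixes A X Y B :: "real mat"
  assumes "A \<in> carrier_mat n' n'" "X \<in> carrier_mat n' n" "Y \<in> carrier_mat n' n" "B \<in> carrier_mat n n"
  shows "A * (X - Y) * B = A * X * B - A * Y * B"
  using assms by (simp add: mult_minus_distrib_mat[of _ n' n'] minus_mult_distrib_mat[of _ n' n])

lemma sandwich_smult:
  fixes A X B :: "real mat"
  assumes "A \<in> carrier_mat n' n'" "X \<in> carrier_mat n' n" "B \<in> carrier_mat n n"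
  shows "A * (t \<cdot>\<^sub>m X) * B = t \<cdot>\<^sub>m (A * X * B)"
  using assms by (simp add: mult_smult_distrib[of _ n' n'] mult_smult_assoc_mat[of _ n' n])

lemma frob_inner_cols:
  assumes "X \<in> carrier_mat n m" "Y \<in> carrier_mat n m"
  shows "frob_inner X Y = (\<Sum>c<m. col X c \<bullet> col Y c)"
  unfolding frob_inner_def using assms
  by (subst sum.swap) (auto simp: scalar_prod_def lessThan_atLeast0 intro!: sum.cong)

lemma frob_inner_transpose:
  assumes "X \<in> carrier_mat n m" "Y \<in> carrier_mat n m"
  shows "frob_inner (transpose_mat X) (transpose_mat Y) = frob_inner X Y"
  unfolding frob_inner_def using assms by (subst sum.swap) (auto intro!: sum.cong)

lemma frob_inner_mult_isometry:
  fixes A X Y :: "real mat"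
  assumes A: "A \<in> carrier_mat n' n" "transpose_mat A * A = 1\<^sub>m n"
    and X: "X \<in> carrier_mat n m" and Y: "Y \<in> carrier_mat n m"
  shows "frob_inner (A * X) (A * Y) = frob_inner X Y"
proof -
  have "frob_inner (A * X) (A * Y) = (\<Sum>c<m. col (A * X) c \<bullet> col (A * Y) c)"
    using A X Y by (simp add: frob_inner_cols[of _ n' m])
  also have "\<dots> = (\<Sum>c<m. (A *\<^sub>v col X c) \<bullet> (A *\<^sub>v col Y c))"
    using A X Y by (intro sum.cong refl) (simp only: col_mult2[of _ n' n _ m] lessThan_iff)
  also have "\<dots> = frob_inner X Y"
    using A X Y by (simp add: scalar_prod_mult_isometry frob_inner_cols[of _ n m])
  finally show ?thesis .
qed

lemma frob_inner_orth_sandwich: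
  fixes A B X Y :: "real mat"
  assumes A: "orth_mat n' A" and B: "orth_mat n B"
    and X: "X \<in> carrier_mat n' n" and Y: "Y \<in> carrier_mat n' n"
  shows "frob_inner (A * X * transpose_mat B) (A * Y * transpose_mat B) = frob_inner X Y"
proof -
  note A' = orth_matD[OF A] and B' = orth_matD[OF B]
  have "frob_inner (A * X * transpose_mat B) (A * Y * transpose_mat B)
      = frob_inner (X * transpose_mat B) (Y * transpose_mat B)"
    using A' B' X Y
    by (simp add: frob_inner_mult_isometry[OF A'(1,3), of "X * transpose_mat B" n "Y * transpose_mat B"])
  also have "\<dots> = frob_inner (B * transpose_mat X) (B * transpose_mat Y)"
    using B' X Y by (simp add: frob_inner_transpose[symmetric, of _ n' n] transpose_mult[of _ n' n])
  also have "\<dots> = frob_inner X Y"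
    using B' X Y by (simp add: frob_inner_mult_isometry[of _ n n] frob_inner_transpose)
  finally show ?thesis .
qed

lemma orth_sandwich_cancel:
  fixes A B W :: "real mat"
  assumes A: "orth_mat n' A" and B: "orth_mat n B" and W: "W \<in> carrier_mat n' n"
  shows "A * (transpose_mat A * W * B) * transpose_mat B = W"
proof -
  note A' = orth_matD[OF A] and B' = orth_matD[OF B]
  have AtW: "transpose_mat A * W \<in> carrier_mat n' n"
    using A' W by simp
  have "A * (transpose_mat A * W * B) * transpose_mat B = A * (transpose_mat A * W * B * transpose_mat B)"
    using A' B' AtW by (intro assoc_mult_mat) auto
  also have "transpose_mat A * W * B * transpose_mat B = transpose_mat A * W"
    using AtW B' by (simp add: right_mult_one_mat[OF AtW])
  also have "A * (transpose_mat A * W) = (A * transpose_mat A) * W"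
    using A' W by (intro assoc_mult_mat[symmetric]) auto
  finally show ?thesis
    using A' W by simp
qed

lemma orth_mult_vec_cancel:
  fixes A :: "real mat"
  assumes A: "orth_mat n A" and b: "b \<in> carrier_vec n"
  shows "A *\<^sub>v (transpose_mat A *\<^sub>v b) = b"
  using orth_matD[OF A] b by (simp flip: assoc_mult_mat_vec)

lemma mult_transpose_orth_cancel:
  fixes X B :: "real mat"
  assumes B: "orth_mat n B" and X: "X \<in> carrier_mat m n"
  shows "X * transpose_mat B * B = X"
  using assoc_mult_mat[OF X transpose_carrier_mat[THEN iffD2, OF orth_matD(1)[OF B]] orth_matD(1)[OF B]]
    orth_matD(3)[OF B] X by simp

definition orth_layers :: "nat list \<Rightarrow> (nat \<Rightarrow> real mat) \<Rightarrow> bool" where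
  "orth_layers ns Q \<longleftrightarrow> (\<forall>j \<le> nlayers ns. orth_mat (ns ! j) (Qext ns Q j))"

lemma orth_layersD: "orth_layers ns Q \<Longrightarrow> j \<le> nlayers ns \<Longrightarrow> orth_mat (ns ! j) (Qext ns Q j)"
  by (simp add: orth_layers_def)

lemma Qext_carrier:
  "orth_layers ns Q \<Longrightarrow> j \<le> nlayers ns \<Longrightarrow> Qext ns Q j \<in> carrier_mat (ns ! j) (ns ! j)"
  using orth_matD(1)[OF orth_layersD] .

lemma orth_layers_transpose: "orth_layers ns Q \<Longrightarrow> orth_layers ns (\<lambda>i. transpose_mat (Q i))"
  by (auto simp: orth_layers_def orth_mat_def Qext_def)

lemma nth_act:
  assumes "p \<in> Param ns" "i < nlayers ns"
  shows "fst (act ns Q p) ! i = Qext ns Q (Suc i) * fst p ! i * transpose_mat (Qext ns Q i)"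
    and "snd (act ns Q p) ! i = Qext ns Q (Suc i) *\<^sub>v snd p ! i"
  using assms by (auto simp: act_def ParamD)

lemma nth_act_inv:
  assumes "p \<in> Param ns" "i < nlayers ns"
  shows "fst (act_inv ns Q p) ! i = transpose_mat (Qext ns Q (Suc i)) * fst p ! i * Qext ns Q i"
    and "snd (act_inv ns Q p) ! i = transpose_mat (Qext ns Q (Suc i)) *\<^sub>v snd p ! i"
  using assms by (auto simp: act_inv_def nth_act Qext_def)

lemma act_Param:
  assumes Q: "orth_layers ns Q" and p: "p \<in> Param ns"
  shows "act ns Q p \<in> Param ns"
proof (rule ParamI)
  fix i assume i: "i < nlayers ns"
  have "Qext ns Q (Suc i) \<in> carrier_mat (ns ! Suc i) (ns ! Suc i)"
    and "Qext ns Q i \<in> carrier_mat (ns ! i) (ns ! i)"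
    using Qext_carrier[OF Q] i by auto
  then show "fst (act ns Q p) ! i \<in> carrier_mat (ns ! Suc i) (ns ! i)"
    and "snd (act ns Q p) ! i \<in> carrier_vec (ns ! Suc i)"
    using ParamD(3,4)[OF p i] by (auto simp: nth_act[OF p i])
qed (auto simp: act_def ParamD[OF p])

lemma act_inv_Param: "orth_layers ns Q \<Longrightarrow> p \<in> Param ns \<Longrightarrow> act_inv ns Q p \<in> Param ns"
  unfolding act_inv_def by (intro act_Param orth_layers_transpose)

lemma act_act_inv:
  assumes Q: "orth_layers ns Q" and p: "p \<in> Param ns"
  shows "act ns Q (act_inv ns Q p) = p"
proof (rule param_eqI[OF act_Param[OF Q act_inv_Param[OF Q p]] p])
  fix i a c assume i: "i < nlayers ns"
  then show "fst (act ns Q (act_inv ns Q p)) ! i $$ (a, c) = fst p ! i $$ (a, c)"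
    using orth_sandwich_cancel[OF orth_layersD[OF Q] orth_layersD[OF Q] ParamD(3)[OF p i]]
    by (simp add: nth_act[OF act_inv_Param[OF Q p] i] nth_act_inv[OF p i])
next
  fix i a assume i: "i < nlayers ns"
  then show "snd (act ns Q (act_inv ns Q p)) ! i $ a = snd p ! i $ a"
    using orth_mult_vec_cancel[OF orth_layersD[OF Q] ParamD(4)[OF p i]]
    by (simp add: nth_act[OF act_inv_Param[OF Q p] i] nth_act_inv[OF p i])
qed

lemma act_padd:
  assumes Q: "orth_layers ns Q" and p: "p \<in> Param ns" and q: "q \<in> Param ns"
  shows "act ns Q (padd p q) = padd (act ns Q p) (act ns Q q)"
proof (rule param_eq_nthI[OF act_Param[OF Q padd_Param[OF p q]]
      padd_Param[OF act_Param[OF Q p] act_Param[OF Q q]]])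
  fix i assume i: "i < nlayers ns"
  note Qs = Qext_carrier[OF Q, of "Suc i"] transpose_carrier_mat[THEN iffD2, OF Qext_carrier[OF Q, of i]]
  show "fst (act ns Q (padd p q)) ! i = fst (padd (act ns Q p) (act ns Q q)) ! i"
    and "snd (act ns Q (padd p q)) ! i = snd (padd (act ns Q p) (act ns Q q)) ! i"
    using i Qs ParamD(3,4)[OF p i] ParamD(3,4)[OF q i]
    by (simp_all add: nth_act[OF padd_Param[OF p q] i] nth_padd[OF act_Param[OF Q p] act_Param[OF Q q] i]
        nth_padd[OF p q i] nth_act[OF p i] nth_act[OF q i] sandwich_add mult_add_distrib_mat_vec)
qed

lemma act_psub:
  assumes Q: "orth_layers ns Q" and p: "p \<in> Param ns" and q: "q \<in> Param ns"
  shows "act ns Q (psub p q) = psub (act ns Q p) (act ns Q q)"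
proof (rule param_eq_nthI[OF act_Param[OF Q psub_Param[OF p q]]
      psub_Param[OF act_Param[OF Q p] act_Param[OF Q q]]])
  fix i assume i: "i < nlayers ns"
  note Qs = Qext_carrier[OF Q, of "Suc i"] transpose_carrier_mat[THEN iffD2, OF Qext_carrier[OF Q, of i]]
  show "fst (act ns Q (psub p q)) ! i = fst (psub (act ns Q p) (act ns Q q)) ! i"
    and "snd (act ns Q (psub p q)) ! i = snd (psub (act ns Q p) (act ns Q q)) ! i"
    using i Qs ParamD(3,4)[OF p i] ParamD(3,4)[OF q i]
    by (simp_all add: nth_act[OF psub_Param[OF p q] i] nth_psub[OF act_Param[OF Q p] act_Param[OF Q q] i]
        nth_psub[OF p q i] nth_act[OF p i] nth_act[OF q i] sandwich_minus mult_minus_distrib_mat_vec)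
qed

lemma act_psmult:
  assumes Q: "orth_layers ns Q" and p: "p \<in> Param ns"
  shows "act ns Q (psmult t p) = psmult t (act ns Q p)"
proof (rule param_eq_nthI[OF act_Param[OF Q psmult_Param[OF p]] psmult_Param[OF act_Param[OF Q p]]])
  fix i assume i: "i < nlayers ns"
  note Qs = Qext_carrier[OF Q, of "Suc i"] transpose_carrier_mat[THEN iffD2, OF Qext_carrier[OF Q, of i]]
  show "fst (act ns Q (psmult t p)) ! i = fst (psmult t (act ns Q p)) ! i"
    and "snd (act ns Q (psmult t p)) ! i = snd (psmult t (act ns Q p)) ! i"
    using i Qs ParamD(3,4)[OF p i]
    by (simp_all add: nth_act[OF psmult_Param[OF p] i] nth_psmult[OF act_Param[OF Q p] i]
        nth_psmult[OF p i] nth_act[OF p i] sandwich_smult mult_mat_vec)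
qed

lemma pinner_act:
  assumes Q: "orth_layers ns Q" and p: "p \<in> Param ns" and q: "q \<in> Param ns"
  shows "pinner (act ns Q p) (act ns Q q) = pinner p q"
  unfolding pinner_Param[OF act_Param[OF Q p] act_Param[OF Q q]] pinner_Param[OF p q]
  using frob_inner_orth_sandwich[OF orth_layersD[OF Q] orth_layersD[OF Q] ParamD(3)[OF p] ParamD(3)[OF q]]
    scalar_prod_mult_isometry[OF Qext_carrier[OF Q] orth_matD(3)[OF orth_layersD[OF Q]]
      ParamD(4)[OF p] ParamD(4)[OF q]]
  by (simp add: nth_act p q)

lemma pnorm_act: "orth_layers ns Q \<Longrightarrow> p \<in> Param ns \<Longrightarrow> pnorm (act ns Q p) = pnorm p"
  by (simp add: pnorm_def pinner_act)

lemma radial_carrier: "v \<in> carrier_vec n \<Longrightarrow> radial h v \<in> carrier_vec n"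
  unfolding radial_def by auto

lemma radial_mult_isometry:
  fixes M :: "real mat"
  assumes M: "M \<in> carrier_mat n m" "transpose_mat M * M = 1\<^sub>m m" and v: "v \<in> carrier_vec m"
  shows "radial h (M *\<^sub>v v) = M *\<^sub>v radial h v"
proof (cases "v = 0\<^sub>v m")
  case True
  have "M *\<^sub>v 0\<^sub>v m = 0\<^sub>v n"
    using M by (intro eq_vecI) auto
  then show ?thesis
    using True M by (simp add: radial_def)
next
  case False
  have "M *\<^sub>v v \<noteq> 0\<^sub>v n"
  proof
    assume "M *\<^sub>v v = 0\<^sub>v n"
    then have "transpose_mat M *\<^sub>v (M *\<^sub>v v) = 0\<^sub>v m"
      using M by (intro eq_vecI) auto
    then show False
      using False M v by (simp flip: assoc_mult_mat_vec)
  qed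
  moreover have "vnorm (M *\<^sub>v v) = vnorm v"
    by (simp add: vnorm_def scalar_prod_mult_isometry[OF M v v])
  ultimately show ?thesis
    using False M v by (simp add: radial_def mult_mat_vec)
qed

lemma ff_carrier:
  assumes "length bs = length Ws"
    and "\<And>j. j < length Ws \<Longrightarrow> Ws ! j \<in> carrier_mat (d (Suc j)) (d j) \<and> bs ! j \<in> carrier_vec (d (Suc j))"
    and "x \<in> carrier_vec (d 0)"
  shows "ff h i Ws bs x \<in> carrier_vec (d (length Ws))"
  using assms
proof (induction Ws arbitrary: bs d i x)
  case (Cons W Ws)
  obtain b bs' where bs: "bs = b # bs'"
    using Cons.prems(1) by (cases bs) auto
  have "radial (h i) (W *\<^sub>v x + b) \<in> carrier_vec (d 1)"
    using Cons.prems(2)[of 0] Cons.prems(3) by (auto simp: bs intro: radial_carrier)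
  then show ?case
    using Cons.IH[of bs' "\<lambda>j. d (Suc j)"] Cons.prems(1,2) by (fastforce simp: bs)
qed simp

lemma layer_intertwined:
  fixes W W' M M' :: "real mat"
  assumes M: "M \<in> carrier_mat k' k" and M': "M' \<in> carrier_mat n' n" "transpose_mat M' * M' = 1\<^sub>m n"
    and W: "W \<in> carrier_mat n k" "b \<in> carrier_vec n" "W' \<in> carrier_mat n' k'"
    and WW': "W' * M = M' * W" "b' = M' *\<^sub>v b" and x: "x \<in> carrier_vec k"
  shows "radial g (W' *\<^sub>v (M *\<^sub>v x) + b') = M' *\<^sub>v radial g (W *\<^sub>v x + b)"
proof -
  have "W' *\<^sub>v (M *\<^sub>v x) = (W' * M) *\<^sub>v x"
    using M W x by simp
  also have "\<dots> = M' *\<^sub>v (W *\<^sub>v x)"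
    using M' W x by (simp add: WW')
  finally have "W' *\<^sub>v (M *\<^sub>v x) + b' = M' *\<^sub>v (W *\<^sub>v x + b)"
    using M' W x by (simp add: WW' mult_add_distrib_mat_vec)
  then show ?thesis
    using radial_mult_isometry[OF M'] W x by simp
qed

lemma ff_intertwined:
  assumes "length Ws' = length Ws" "length bs = length Ws" "length bs' = length Ws"
    and "\<And>j. j \<le> length Ws \<Longrightarrow> M j \<in> carrier_mat (d' j) (d j) \<and> transpose_mat (M j) * M j = 1\<^sub>m (d j)"
    and "\<And>j. j < length Ws \<Longrightarrow> Ws ! j \<in> carrier_mat (d (Suc j)) (d j) \<and> bs ! j \<in> carrier_vec (d (Suc j))
            \<and> Ws' ! j \<in> carrier_mat (d' (Suc j)) (d' j)"
    and "\<And>j. j < length Ws \<Longrightarrow> Ws' ! j * M j = M (Suc j) * Ws ! j \<and> bs' ! j = M (Suc j) *\<^sub>v bs ! j"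
    and "x \<in> carrier_vec (d 0)"
  shows "ff h i Ws' bs' (M 0 *\<^sub>v x) = M (length Ws) *\<^sub>v ff h i Ws bs x"
  using assms
proof (induction Ws arbitrary: Ws' bs bs' M d d' i x)
  case (Cons W Ws)
  obtain W' Ws0' b bs0 b' bs0' where lists: "Ws' = W' # Ws0'" "bs = b # bs0" "bs' = b' # bs0'"
    using Cons.prems(1-3) by (cases Ws'; cases bs; cases bs') auto
  define y where "y = radial (h i) (W *\<^sub>v x + b)"
  have "radial (h i) (W' *\<^sub>v (M 0 *\<^sub>v x) + b') = M (Suc 0) *\<^sub>v y"
    unfolding y_def
    by (rule layer_intertwined)
      (use Cons.prems(4)[of 0] Cons.prems(4)[of 1] Cons.prems(5,6)[of 0] Cons.prems(7)
        in \<open>auto simp: lists\<close>)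
  moreover have "ff h (Suc i) Ws0' bs0' (M (Suc 0) *\<^sub>v y)
      = M (Suc (length Ws)) *\<^sub>v ff h (Suc i) Ws bs0 y"
  proof (rule Cons.IH[where M = "\<lambda>j. M (Suc j)" and d = "\<lambda>j. d (Suc j)" and d' = "\<lambda>j. d' (Suc j)"])
    show "y \<in> carrier_vec (d (Suc 0))"
      using Cons.prems(5)[of 0] Cons.prems(7) by (auto simp: y_def lists intro: radial_carrier)
    fix j
    show "j \<le> length Ws \<Longrightarrow> M (Suc j) \<in> carrier_mat (d' (Suc j)) (d (Suc j)) \<and>
        transpose_mat (M (Suc j)) * M (Suc j) = 1\<^sub>m (d (Suc j))"
      using Cons.prems(4)[of "Suc j"] by simp
    show "j < length Ws \<Longrightarrow> Ws ! j \<in> carrier_mat (d (Suc (Suc j))) (d (Suc j)) \<and>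
        bs0 ! j \<in> carrier_vec (d (Suc (Suc j))) \<and> Ws0' ! j \<in> carrier_mat (d' (Suc (Suc j))) (d' (Suc j))"
      and "j < length Ws \<Longrightarrow> Ws0' ! j * M (Suc j) = M (Suc (Suc j)) * Ws ! j \<and>
        bs0' ! j = M (Suc (Suc j)) *\<^sub>v bs0 ! j"
      using Cons.prems(5,6)[of "Suc j"] by (simp_all add: lists)
  qed (use Cons.prems(1-3) in \<open>simp_all add: lists\<close>)
  ultimately show ?case
    by (simp add: lists y_def)
qed simp

lemma feedforward_intertwined:
  assumes p: "p \<in> Param ns" and p': "p' \<in> Param ns'" and len: "length ns' = length ns"
    and M: "\<And>j. j \<le> nlayers ns \<Longrightarrow>
              M j \<in> carrier_mat (ns' ! j) (ns ! j) \<and> transpose_mat (M j) * M j = 1\<^sub>m (ns ! j)"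
    and W: "\<And>j. j < nlayers ns \<Longrightarrow>
              fst p' ! j * M j = M (Suc j) * fst p ! j \<and> snd p' ! j = M (Suc j) *\<^sub>v snd p ! j"
    and x: "x \<in> carrier_vec (ns ! 0)"
  shows "feedforward h p' (M 0 *\<^sub>v x) = M (nlayers ns) *\<^sub>v feedforward h p x"
proof -
  have L: "nlayers ns' = nlayers ns"
    using len by (simp add: nlayers_def)
  have "ff h 1 (fst p') (snd p') (M 0 *\<^sub>v x) = M (length (fst p)) *\<^sub>v ff h 1 (fst p) (snd p) x"
    by (rule ff_intertwined[where d = "\<lambda>j. ns ! j" and d' = "\<lambda>j. ns' ! j"])
      (use ParamD[OF p] ParamD[OF p'] L M W x in auto)
  then show ?thesis
    using ParamD(1)[OF p] by (simp add: feedforward_def)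
qed

lemma feedforward_carrier:
  assumes "p \<in> Param ns" "x \<in> carrier_vec (ns ! 0)"
  shows "feedforward h p x \<in> carrier_vec (ns ! nlayers ns)"
  using ff_carrier[where d = "\<lambda>j. ns ! j" and Ws = "fst p" and bs = "snd p"] ParamD[OF assms(1)] assms(2)
  by (simp add: feedforward_def)

lemma loss_cong:
  "(\<And>x y. (x, y) \<in> set D \<Longrightarrow> feedforward h p x = feedforward h q x) \<Longrightarrow> loss h C D p = loss h C D q"
  unfolding loss_def by (intro arg_cong[where f = sum_list] map_cong) auto

lemma loss_act:
  assumes Q: "orth_layers ns Q" and p: "p \<in> Param ns"
    and D: "\<forall>(x, y) \<in> set D. x \<in> carrier_vec (ns ! 0)"
  shows "loss h C D (act ns Q p) = loss h C D p"
proof (rule loss_cong)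
  fix x y assume "(x, y) \<in> set D"
  then have x: "x \<in> carrier_vec (ns ! 0)"
    using D by auto
  have "feedforward h (act ns Q p) (Qext ns Q 0 *\<^sub>v x) = Qext ns Q (nlayers ns) *\<^sub>v feedforward h p x"
  proof (rule feedforward_intertwined[OF p act_Param[OF Q p] refl _ _ x])
    fix j
    show "j \<le> nlayers ns \<Longrightarrow> Qext ns Q j \<in> carrier_mat (ns ! j) (ns ! j) \<and>
        transpose_mat (Qext ns Q j) * Qext ns Q j = 1\<^sub>m (ns ! j)"
      using orth_matD[OF orth_layersD[OF Q]] by blast
    assume j: "j < nlayers ns"
    have "Qext ns Q (Suc j) * fst p ! j \<in> carrier_mat (ns ! Suc j) (ns ! j)"
      using Qext_carrier[OF Q, of "Suc j"] ParamD(3)[OF p j] j by simp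
    then show "fst (act ns Q p) ! j * Qext ns Q j = Qext ns Q (Suc j) * fst p ! j \<and>
        snd (act ns Q p) ! j = Qext ns Q (Suc j) *\<^sub>v snd p ! j"
      using mult_transpose_orth_cancel[OF orth_layersD[OF Q, of j]] j by (simp add: nth_act[OF p j])
  qed
  then show "feedforward h (act ns Q p) x = feedforward h p x"
    using x feedforward_carrier[OF p x] by (simp add: Qext_def)
qed

section \<open>Equivariance of gradient descent\<close>

lemma has_grad_act:
  assumes Q: "orth_layers ns Q" and x: "x \<in> Param ns"
    and inv: "\<And>z. z \<in> Param ns \<Longrightarrow> f (act ns Q z) = f z"
    and g: "has_grad f ns x g"
  shows "has_grad f ns (act ns Q x) (act ns Q g)"
  unfolding has_grad_def
proof (intro conjI allI impI)
  have G: "g \<in> Param ns"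
    using g by (simp add: has_grad_def)
  then show "act ns Q g \<in> Param ns"
    by (rule act_Param[OF Q])
  fix e :: real assume "e > 0"
  then obtain \<delta> where \<delta>: "\<delta> > 0" and bound: "\<forall>q\<in>Param ns. pnorm q < \<delta> \<longrightarrow>
      \<bar>f (padd x q) - f x - pinner g q\<bar> \<le> e * pnorm q"
    using g unfolding has_grad_def by blast
  show "\<exists>\<delta>>0. \<forall>q\<in>Param ns. pnorm q < \<delta> \<longrightarrow>
      \<bar>f (padd (act ns Q x) q) - f (act ns Q x) - pinner (act ns Q g) q\<bar> \<le> e * pnorm q"
  proof (intro exI[of _ \<delta>] conjI ballI impI \<delta>)
    fix q assume q: "q \<in> Param ns" and "pnorm q < \<delta>"
    define q' where "q' = act_inv ns Q q"
    have q': "q' \<in> Param ns" and q_eq: "q = act ns Q q'"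
      using act_inv_Param[OF Q q] act_act_inv[OF Q q] by (simp_all add: q'_def)
    have "\<bar>f (padd x q') - f x - pinner g q'\<bar> \<le> e * pnorm q'"
      using bound q' \<open>pnorm q < \<delta>\<close> pnorm_act[OF Q q'] by (simp add: q_eq)
    then show "\<bar>f (padd (act ns Q x) q) - f (act ns Q x) - pinner (act ns Q g) q\<bar> \<le> e * pnorm q"
      by (simp add: q_eq act_padd[OF Q x q', symmetric] inv padd_Param x q' pinner_act Q G pnorm_act)
  qed
qed

lemma gd_step_act:
  assumes df: "differentiable_on_Param f ns" and Q: "orth_layers ns Q" and x: "x \<in> Param ns"
    and inv: "\<And>z. z \<in> Param ns \<Longrightarrow> f (act ns Q z) = f z"
  shows "gd_step f \<eta> ns (act ns Q x) = act ns Q (gd_step f \<eta> ns x)"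
proof -
  have "grad f ns (act ns Q x) = act ns Q (grad f ns x)"
    by (rule grad_eqI[OF has_grad_act[OF Q x inv has_grad_grad[OF df x]]])
  then show ?thesis
    using act_psub[OF Q x psmult_Param[OF grad_Param[OF df x]]] act_psmult[OF Q grad_Param[OF df x]]
    by (simp add: gd_step_def)
qed

lemma funpow_gd_step_act:
  assumes df: "differentiable_on_Param f ns" and Q: "orth_layers ns Q" and x: "x \<in> Param ns"
    and inv: "\<And>z. z \<in> Param ns \<Longrightarrow> f (act ns Q z) = f z"
  shows "(gd_step f \<eta> ns ^^ k) (act ns Q x) = act ns Q ((gd_step f \<eta> ns ^^ k) x)"
proof (induction k)
  case (Suc k)
  have "(gd_step f \<eta> ns ^^ Suc k) (act ns Q x) = gd_step f \<eta> ns (act ns Q ((gd_step f \<eta> ns ^^ k) x))"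
    using Suc.IH by simp
  also have "\<dots> = act ns Q (gd_step f \<eta> ns ((gd_step f \<eta> ns ^^ k) x))"
    by (rule gd_step_act[OF df Q funpow_gd_step_Param[OF df x]]) (rule inv)
  finally show ?case
    by simp
qed simp

section \<open>Restriction to the reduced widths\<close>

lemma length_red_widths [simp]: "length (red_widths ns) = length ns"
  by (simp add: red_widths_def)

lemma nlayers_red_widths [simp]: "nlayers (red_widths ns) = nlayers ns"
  by (simp add: nlayers_def)

lemma red_widths_le: "i \<le> nlayers ns \<Longrightarrow> red_widths ns ! i \<le> ns ! i"
  by (cases "ns = []"; cases i) (auto simp: red_widths_def nlayers_def)

lemma red_widths_0: "red_widths ns ! 0 = ns ! 0"
  by (cases "ns = []") (auto simp: red_widths_def nlayers_def)

lemma red_widths_last: "red_widths ns ! nlayers ns = ns ! nlayers ns"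
  by (cases "ns = []") (auto simp: red_widths_def nlayers_def)

lemma less_red_widths_less: "i \<le> nlayers ns \<Longrightarrow> c < red_widths ns ! i \<Longrightarrow> c < ns ! i"
  by (meson less_le_trans red_widths_le)

lemma Inc_carrier [simp]: "Inc n k \<in> carrier_mat n k"
  and dim_Inc [simp]: "dim_row (Inc n k) = n" "dim_col (Inc n k) = k"
  by (simp_all add: Inc_def)

lemma index_Inc [simp]: "a < n \<Longrightarrow> c < k \<Longrightarrow> Inc n k $$ (a, c) = (if a = c then 1 else 0)"
  by (simp add: Inc_def)

lemma Inc_self: "Inc n n = 1\<^sub>m n"
  by (auto simp: Inc_def)

lemma index_mult_Inc:
  fixes B :: "real mat"
  assumes "B \<in> carrier_mat m n" "a < m" "c < k" "k \<le> n"
  shows "(B * Inc n k) $$ (a, c) = B $$ (a, c)"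
  using assms by (simp add: Inc_def scalar_prod_def if_distrib[of "(*) _"] cong: if_cong)

lemma index_Inc_mult:
  fixes R :: "real mat"
  assumes "R \<in> carrier_mat k m" "a < n" "c < m" "k \<le> n"
  shows "(Inc n k * R) $$ (a, c) = (if a < k then R $$ (a, c) else 0)"
  using assms by (simp add: Inc_def scalar_prod_def if_distrib[of "\<lambda>x. x * _"] cong: if_cong)

lemma index_Inc_mult_vec:
  fixes v :: "real vec"
  assumes "v \<in> carrier_vec k" "a < n" "k \<le> n"
  shows "(Inc n k *\<^sub>v v) $ a = (if a < k then v $ a else 0)"
  using assms by (simp add: Inc_def scalar_prod_def if_distrib[of "\<lambda>x. x * _"] cong: if_cong)

lemma transpose_Inc_mult_Inc:
  assumes "k \<le> n"
  shows "transpose_mat (Inc n k) * Inc n k = (1\<^sub>m k :: real mat)"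
proof (rule eq_matI)
  fix a c assume "a < dim_row (1\<^sub>m k :: real mat)" "c < dim_col (1\<^sub>m k :: real mat)"
  then show "(transpose_mat (Inc n k) * Inc n k) $$ (a, c) = 1\<^sub>m k $$ (a, c)"
    using index_mult_Inc[of "transpose_mat (Inc n k)" k n a c k] assms by simp
qed auto

lemma mult_Inc_eq_Inc_mult_iff:
  fixes W V :: "real mat"
  assumes W: "W \<in> carrier_mat n' n" and V: "V \<in> carrier_mat k' k" and "k \<le> n" "k' \<le> n'"
  shows "W * Inc n k = Inc n' k' * V \<longleftrightarrow>
         (\<forall>a < n'. \<forall>c < k. W $$ (a, c) = (if a < k' then V $$ (a, c) else 0))"
proof -
  have "(W * Inc n k) $$ (a, c) = W $$ (a, c)" "(Inc n' k' * V) $$ (a, c) = (if a < k' then V $$ (a, c) else 0)"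
    if "a < n'" "c < k" for a c
    using index_mult_Inc[OF W that assms(3)] index_Inc_mult[OF V that assms(4)] by simp_all
  moreover have "W * Inc n k \<in> carrier_mat n' k" "Inc n' k' * V \<in> carrier_mat n' k"
    using W V by auto
  ultimately show ?thesis
    by (metis (no_types, lifting) carrier_matD eq_matI)
qed

lemma eq_Inc_mult_vec_iff:
  fixes v u :: "real vec"
  assumes v: "v \<in> carrier_vec n'" and u: "u \<in> carrier_vec k'" and "k' \<le> n'"
  shows "v = Inc n' k' *\<^sub>v u \<longleftrightarrow> (\<forall>a < n'. v $ a = (if a < k' then u $ a else 0))"
proof -
  have "(Inc n' k' *\<^sub>v u) $ a = (if a < k' then u $ a else 0)" if "a < n'" for a
    using index_Inc_mult_vec[OF u that assms(3)] .
  moreover have "Inc n' k' *\<^sub>v u \<in> carrier_vec n'"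
    by (simp add: carrier_vecI)
  ultimately show ?thesis
    using v by (metis carrier_vecD eq_vecI)
qed

definition restricts_to :: "nat list \<Rightarrow> param \<Rightarrow> param \<Rightarrow> bool" where
  "restricts_to ns p r \<longleftrightarrow> p \<in> Param ns \<and> r \<in> Param (red_widths ns) \<and>
     (\<forall>i < nlayers ns.
        fst p ! i * Inc (ns ! i) (red_widths ns ! i) = Inc (ns ! Suc i) (red_widths ns ! Suc i) * fst r ! i \<and>
        snd p ! i = Inc (ns ! Suc i) (red_widths ns ! Suc i) *\<^sub>v snd r ! i)"

lemma restricts_to_iff:
  "restricts_to ns p r \<longleftrightarrow> p \<in> Param ns \<and> r \<in> Param (red_widths ns) \<and>
     (\<forall>i < nlayers ns. \<forall>a < ns ! Suc i.
        (\<forall>c < red_widths ns ! i.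
           fst p ! i $$ (a, c) = (if a < red_widths ns ! Suc i then fst r ! i $$ (a, c) else 0)) \<and>
        snd p ! i $ a = (if a < red_widths ns ! Suc i then snd r ! i $ a else 0))"
proof -
  have "(fst p ! i * Inc (ns ! i) (red_widths ns ! i) = Inc (ns ! Suc i) (red_widths ns ! Suc i) * fst r ! i \<and>
        snd p ! i = Inc (ns ! Suc i) (red_widths ns ! Suc i) *\<^sub>v snd r ! i) \<longleftrightarrow>
      (\<forall>a < ns ! Suc i.
        (\<forall>c < red_widths ns ! i.
           fst p ! i $$ (a, c) = (if a < red_widths ns ! Suc i then fst r ! i $$ (a, c) else 0)) \<and>
        snd p ! i $ a = (if a < red_widths ns ! Suc i then snd r ! i $ a else 0))"
    if p: "p \<in> Param ns" and r: "r \<in> Param (red_widths ns)" and i: "i < nlayers ns" for i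
    using mult_Inc_eq_Inc_mult_iff[OF ParamD(3)[OF p i] ParamD(3)[OF r] red_widths_le red_widths_le]
      eq_Inc_mult_vec_iff[OF ParamD(4)[OF p i] ParamD(4)[OF r] red_widths_le] i
    by auto
  then show ?thesis
    unfolding restricts_to_def by blast
qed

lemma feedforward_restricts_to:
  assumes pr: "restricts_to ns p r" and x: "x \<in> carrier_vec (ns ! 0)"
  shows "feedforward h p x = feedforward h r x"
proof -
  let ?M = "\<lambda>j. Inc (ns ! j) (red_widths ns ! j)"
  have p: "p \<in> Param ns" and r: "r \<in> Param (red_widths ns)"
    using pr by (auto simp: restricts_to_def)
  have x': "x \<in> carrier_vec (red_widths ns ! 0)"
    using x by (simp add: red_widths_0)
  have "feedforward h p (?M 0 *\<^sub>v x) = ?M (nlayers (red_widths ns)) *\<^sub>v feedforward h r x"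
    by (rule feedforward_intertwined[OF r p length_red_widths[symmetric] _ _ x'])
      (use pr red_widths_le transpose_Inc_mult_Inc in \<open>auto simp: restricts_to_def\<close>)
  then show ?thesis
    using x feedforward_carrier[OF r x'] by (simp add: red_widths_0 red_widths_last Inc_self)
qed

lemma loss_restricts_to:
  assumes "restricts_to ns p r" and "\<forall>(x, y) \<in> set D. x \<in> carrier_vec (ns ! 0)"
  shows "loss h C D p = loss h C D r"
  using assms by (intro loss_cong) (auto intro: feedforward_restricts_to)

lemma restricts_toD:
  assumes "restricts_to ns p r"
  shows "p \<in> Param ns" "r \<in> Param (red_widths ns)"
    and "i < nlayers ns \<Longrightarrow> a < ns ! Suc i \<Longrightarrow> c < red_widths ns ! i \<Longrightarrow>
           fst p ! i $$ (a, c) = (if a < red_widths ns ! Suc i then fst r ! i $$ (a, c) else 0)"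
    and "i < nlayers ns \<Longrightarrow> a < ns ! Suc i \<Longrightarrow>
           snd p ! i $ a = (if a < red_widths ns ! Suc i then snd r ! i $ a else 0)"
  using assms unfolding restricts_to_iff by blast+

lemma restricts_toI:
  assumes "p \<in> Param ns" "r \<in> Param (red_widths ns)"
    and "\<And>i a c. i < nlayers ns \<Longrightarrow> a < ns ! Suc i \<Longrightarrow> c < red_widths ns ! i \<Longrightarrow>
           fst p ! i $$ (a, c) = (if a < red_widths ns ! Suc i then fst r ! i $$ (a, c) else 0)"
    and "\<And>i a. i < nlayers ns \<Longrightarrow> a < ns ! Suc i \<Longrightarrow>
           snd p ! i $ a = (if a < red_widths ns ! Suc i then snd r ! i $ a else 0)"
  shows "restricts_to ns p r"
  using assms unfolding restricts_to_iff by blast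

lemma restricts_to_padd:
  assumes pr: "restricts_to ns p r" and qs: "restricts_to ns q s"
  shows "restricts_to ns (padd p q) (padd r s)"
proof (rule restricts_toI)
  note P = restricts_toD(1,2)[OF pr] restricts_toD(1,2)[OF qs]
  show "padd p q \<in> Param ns" "padd r s \<in> Param (red_widths ns)"
    using P by (simp_all add: padd_Param)
  fix i a c assume "i < nlayers ns" "a < ns ! Suc i"
  then show "c < red_widths ns ! i \<Longrightarrow> fst (padd p q) ! i $$ (a, c)
      = (if a < red_widths ns ! Suc i then fst (padd r s) ! i $$ (a, c) else 0)"
    and "snd (padd p q) ! i $ a = (if a < red_widths ns ! Suc i then snd (padd r s) ! i $ a else 0)"
    by (simp_all add: index_padd[OF P(1,3)] index_padd[OF P(2,4)] restricts_toD(3,4)[OF pr]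
        restricts_toD(3,4)[OF qs] less_red_widths_less)
qed

lemma restricts_to_psmult:
  assumes pr: "restricts_to ns p r"
  shows "restricts_to ns (psmult t p) (psmult t r)"
proof (rule restricts_toI)
  note P = restricts_toD(1,2)[OF pr]
  show "psmult t p \<in> Param ns" "psmult t r \<in> Param (red_widths ns)"
    using P by (simp_all add: psmult_Param)
  fix i a c assume "i < nlayers ns" "a < ns ! Suc i"
  then show "c < red_widths ns ! i \<Longrightarrow> fst (psmult t p) ! i $$ (a, c)
      = (if a < red_widths ns ! Suc i then fst (psmult t r) ! i $$ (a, c) else 0)"
    and "snd (psmult t p) ! i $ a = (if a < red_widths ns ! Suc i then snd (psmult t r) ! i $ a else 0)"
    by (simp_all add: index_psmult[OF P(1)] index_psmult[OF P(2)] restricts_toD(3,4)[OF pr]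
        less_red_widths_less)
qed

lemma restricts_to_unit_weight:
  assumes "a < red_widths ns ! Suc i" "c < red_widths ns ! i"
  shows "restricts_to ns (unit_weight ns i a c) (unit_weight (red_widths ns) i a c)"
  by (rule restricts_toI[OF unit_weight_Param unit_weight_Param])
    (use assms in \<open>auto simp: unit_weight_def less_red_widths_less\<close>)

lemma restricts_to_unit_weight_pzero:
  assumes "red_widths ns ! i \<le> c"
  shows "restricts_to ns (unit_weight ns i a c) (pzero (red_widths ns))"
  by (rule restricts_toI[OF unit_weight_Param pzero_Param])
    (use assms in \<open>auto simp: unit_weight_def pzero_def less_red_widths_less\<close>)

lemma restricts_to_unit_bias:
  assumes "a < red_widths ns ! Suc i"
  shows "restricts_to ns (unit_bias ns i a) (unit_bias (red_widths ns) i a)"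
  by (rule restricts_toI[OF unit_bias_Param unit_bias_Param])
    (use assms in \<open>auto simp: unit_bias_def less_red_widths_less\<close>)

lemma embed_Param: "embed ns r \<in> Param ns"
  by (rule ParamI) (auto simp: embed_def Let_def)

lemma index_embed:
  assumes "i < nlayers ns" "a < ns ! Suc i"
  shows "c < ns ! i \<Longrightarrow> fst (embed ns r) ! i $$ (a, c) =
           (if a < red_widths ns ! Suc i \<and> c < red_widths ns ! i then fst r ! i $$ (a, c) else 0)"
    and "snd (embed ns r) ! i $ a = (if a < red_widths ns ! Suc i then snd r ! i $ a else 0)"
  using assms by (simp_all add: embed_def Let_def)

lemma proj_Param: "p \<in> Param ns \<Longrightarrow> proj ns p \<in> Param ns"
  by (rule ParamI) (auto simp: proj_def Let_def ParamD Param_dims)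

lemma index_proj:
  assumes "p \<in> Param ns" "i < nlayers ns" "a < ns ! Suc i"
  shows "c < ns ! i \<Longrightarrow> fst (proj ns p) ! i $$ (a, c) =
           (if red_widths ns ! Suc i \<le> a \<and> c < red_widths ns ! i then 0 else fst p ! i $$ (a, c))"
    and "snd (proj ns p) ! i $ a = (if red_widths ns ! Suc i \<le> a then 0 else snd p ! i $ a)"
  using assms by (simp_all add: proj_def Let_def ParamD Param_dims)

lemma proj_grad_eq_embed:
  assumes pr: "restricts_to ns p r"
    and g: "has_grad f ns p g" and g': "has_grad f' (red_widths ns) r g'"
    and f: "\<And>q s. restricts_to ns q s \<Longrightarrow> f q = f' s"
  shows "proj ns g = embed ns g'"
proof -
  have G: "g \<in> Param ns" "g' \<in> Param (red_widths ns)"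
    using g g' by (auto simp: has_grad_def)
  have dir: "pinner g u = pinner g' u'" if "restricts_to ns u u'" for u u'
    by (rule has_grad_pinner_eq[OF g g' restricts_toD(1,2)[OF that]])
      (use pr that in \<open>auto intro!: f restricts_to_padd restricts_to_psmult\<close>)
  show ?thesis
  proof (rule param_eqI[OF proj_Param[OF G(1)] embed_Param])
    fix i a c assume i: "i < nlayers ns" and a: "a < ns ! Suc i" and c: "c < ns ! i"
    show "fst (proj ns g) ! i $$ (a, c) = fst (embed ns g') ! i $$ (a, c)"
    proof (cases "c < red_widths ns ! i")
      case c': True
      show ?thesis
      proof (cases "a < red_widths ns ! Suc i")
        case True
        then show ?thesis
          using dir[OF restricts_to_unit_weight[OF True c']] i a c c'
          by (simp add: index_proj[OF G(1)] index_embed pinner_unit_weight G)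
      qed (use i a c c' in \<open>simp add: index_proj[OF G(1)] index_embed\<close>)
    next
      case False
      \<comment> \<open>the loss does not depend on columns that only ever meet zero inputs\<close>
      then show ?thesis
        using dir[OF restricts_to_unit_weight_pzero[of ns i c a]] i a c
        by (simp add: index_proj[OF G(1)] index_embed pinner_unit_weight pinner_pzero G)
    qed
  next
    fix i a assume i: "i < nlayers ns" and a: "a < ns ! Suc i"
    show "snd (proj ns g) ! i $ a = snd (embed ns g') ! i $ a"
    proof (cases "a < red_widths ns ! Suc i")
      case True
      then show ?thesis
        using dir[OF restricts_to_unit_bias[OF True]] i a
        by (simp add: index_proj[OF G(1)] index_embed pinner_unit_bias G)
    qed (use i a in \<open>simp add: index_proj[OF G(1)] index_embed\<close>)
  qed
qed

lemma restricts_to_padd_embed: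
  assumes U: "restricts_to ns U (pzero (red_widths ns))" and r: "r \<in> Param (red_widths ns)"
  shows "restricts_to ns (padd (embed ns r) U) r"
proof (rule restricts_toI[OF padd_Param[OF embed_Param restricts_toD(1)[OF U]] r])
  fix i a c assume "i < nlayers ns" "a < ns ! Suc i"
  then show "c < red_widths ns ! i \<Longrightarrow> fst (padd (embed ns r) U) ! i $$ (a, c)
      = (if a < red_widths ns ! Suc i then fst r ! i $$ (a, c) else 0)"
    and "snd (padd (embed ns r) U) ! i $ a = (if a < red_widths ns ! Suc i then snd r ! i $ a else 0)"
    by (simp_all add: index_padd[OF embed_Param restricts_toD(1)[OF U]] index_embed
        restricts_toD(3,4)[OF U] pzero_def less_red_widths_less)
qed

lemma proj_psub_psmult:
  assumes p: "p \<in> Param ns" and q: "q \<in> Param ns"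
  shows "proj ns (psub p (psmult t q)) = psub (proj ns p) (psmult t (proj ns q))"
proof -
  have X: "psub p (psmult t q) \<in> Param ns" and Y: "psub (proj ns p) (psmult t (proj ns q)) \<in> Param ns"
    using p q by (simp_all add: psub_Param psmult_Param proj_Param)
  show ?thesis
    by (rule param_eqI[OF proj_Param[OF X] Y])
      (simp_all add: index_proj[OF X] index_proj[OF p] index_proj[OF q] index_psub[OF p psmult_Param[OF q]]
        index_psmult[OF q] index_psub[OF proj_Param[OF p] psmult_Param[OF proj_Param[OF q]]]
        index_psmult[OF proj_Param[OF q]])
qed

lemma proj_restricts_to:
  assumes pr: "restricts_to ns p r"
  shows "proj ns p = p"
  by (rule param_eqI[OF proj_Param[OF restricts_toD(1)[OF pr]] restricts_toD(1)[OF pr]])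
    (simp_all add: index_proj[OF restricts_toD(1)[OF pr]] restricts_toD(3,4)[OF pr])

lemma psub_padd_embed:
  assumes U: "U \<in> Param ns" and r: "r \<in> Param (red_widths ns)" and g: "g \<in> Param (red_widths ns)"
  shows "psub (padd (embed ns r) U) (psmult t (embed ns g)) = padd (embed ns (psub r (psmult t g))) U"
proof -
  have X: "padd (embed ns r) U \<in> Param ns"
    using U by (simp add: padd_Param embed_Param)
  show ?thesis
    by (rule param_eqI[OF psub_Param[OF X psmult_Param[OF embed_Param]] padd_Param[OF embed_Param U]])
      (auto simp: index_psub[OF X psmult_Param[OF embed_Param]] index_psmult[OF embed_Param]
        index_padd[OF embed_Param U] index_embed index_psub[OF r psmult_Param[OF g]] index_psmult[OF g])
qed

lemma pgd_step_padd_embed: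
  assumes U: "restricts_to ns U (pzero (red_widths ns))" and r: "r \<in> Param (red_widths ns)"
    and df: "differentiable_on_Param f ns" and dfr: "differentiable_on_Param f (red_widths ns)"
    and f: "\<And>q s. restricts_to ns q s \<Longrightarrow> f q = f s"
  shows "pgd_step f \<eta> ns (padd (embed ns r) U) = padd (embed ns (gd_step f \<eta> (red_widths ns) r)) U"
proof -
  let ?P = "padd (embed ns r) U"
  have P: "restricts_to ns ?P r"
    by (rule restricts_to_padd_embed[OF U r])
  note PP = restricts_toD(1)[OF P]
  have "pgd_step f \<eta> ns ?P = psub (proj ns ?P) (psmult \<eta> (proj ns (grad f ns ?P)))"
    by (simp add: pgd_step_def gd_step_def proj_psub_psmult[OF PP grad_Param[OF df PP]])
  also have "\<dots> = psub ?P (psmult \<eta> (embed ns (grad f (red_widths ns) r)))"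
    using proj_grad_eq_embed[OF P has_grad_grad[OF df PP] has_grad_grad[OF dfr r] f]
    by (simp add: proj_restricts_to[OF P])
  also have "\<dots> = padd (embed ns (gd_step f \<eta> (red_widths ns) r)) U"
    by (simp add: gd_step_def psub_padd_embed[OF restricts_toD(1)[OF U] r grad_Param[OF dfr r]])
  finally show ?thesis .
qed

lemma restricts_to_psub_embed:
  assumes pr: "restricts_to ns p r"
  shows "restricts_to ns (psub p (embed ns r)) (pzero (red_widths ns))"
proof (rule restricts_toI[OF psub_Param[OF restricts_toD(1)[OF pr] embed_Param] pzero_Param])
  fix i a c assume i: "i < nlayers ns" and a: "a < ns ! Suc i"
  then show "c < red_widths ns ! i \<Longrightarrow> fst (psub p (embed ns r)) ! i $$ (a, c)
      = (if a < red_widths ns ! Suc i then fst (pzero (red_widths ns)) ! i $$ (a, c) else 0)"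
    and "snd (psub p (embed ns r)) ! i $ a
      = (if a < red_widths ns ! Suc i then snd (pzero (red_widths ns)) ! i $ a else 0)"
    by (simp_all add: index_psub[OF restricts_toD(1)[OF pr] embed_Param] index_embed
        restricts_toD(3,4)[OF pr] pzero_def less_red_widths_less)
qed

lemma padd_embed_psub_embed:
  assumes p: "p \<in> Param ns"
  shows "padd (embed ns r) (psub p (embed ns r)) = p"
  by (rule param_eqI[OF padd_Param[OF embed_Param psub_Param[OF p embed_Param]] p])
    (simp_all add: index_padd[OF embed_Param psub_Param[OF p embed_Param]] index_psub[OF p embed_Param])

section \<open>The QR compression algorithm\<close>

lemma aug_carrier: "M \<in> carrier_mat n m \<Longrightarrow> aug b M \<in> carrier_mat n (Suc m)"
  by (simp add: aug_def)

lemma mult_aug: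
  fixes A M :: "real mat"
  assumes A: "A \<in> carrier_mat k n" and M: "M \<in> carrier_mat n m" and b: "b \<in> carrier_vec n"
  shows "A * aug b M = aug (A *\<^sub>v b) (A * M)"
proof (rule eq_matI)
  fix r c assume "r < dim_row (aug (A *\<^sub>v b) (A * M))" "c < dim_col (aug (A *\<^sub>v b) (A * M))"
  then show "(A * aug b M) $$ (r, c) = aug (A *\<^sub>v b) (A * M) $$ (r, c)"
    using A M b by (cases c) (auto simp: aug_def scalar_prod_def)
qed (use A M in \<open>auto simp: aug_def\<close>)

lemma aug_inject:
  assumes "M \<in> carrier_mat n m" "M' \<in> carrier_mat n m" "b \<in> carrier_vec n" "b' \<in> carrier_vec n"
    and "aug b M = aug b' M'"
  shows "b = b'" "M = M'"
proof -
  have "b $ r = b' $ r" if "r < n" for r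
    using arg_cong[OF assms(5), of "\<lambda>A. A $$ (r, 0)"] that assms(1-4) by (simp add: aug_def)
  moreover have "M $$ (r, c) = M' $$ (r, c)" if "r < n" "c < m" for r c
    using arg_cong[OF assms(5), of "\<lambda>A. A $$ (r, Suc c)"] that assms(1-4) by (simp add: aug_def)
  ultimately show "b = b'" "M = M'"
    using assms(1-4) by auto
qed

lemma aug_col_0_tail:
  assumes "R \<in> carrier_mat k (Suc m)"
  shows "aug (col R 0) (mat k m (\<lambda>(r, c). R $$ (r, Suc c))) = R"
  using assms by (intro eq_matI) (auto simp: aug_def gr0_conv_Suc)

lemma qr_outputs_middle:
  assumes "qr_outputs ns p Q pr" and "Suc i < nlayers ns"
  obtains R where "orth_mat (ns ! Suc i) (Q (Suc i))"
    and "R \<in> carrier_mat (red_widths ns ! Suc i) (Suc (red_widths ns ! i))"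
    and "qrA ns p Q (Suc i) = Q (Suc i) * Inc (ns ! Suc i) (red_widths ns ! Suc i) * R"
    and "snd pr ! i = col R 0"
    and "fst pr ! i = mat (red_widths ns ! Suc i) (red_widths ns ! i) (\<lambda>(r, c). R $$ (r, Suc c))"
proof -
  obtain R where "\<forall>j. 1 \<le> j \<and> j \<le> nlayers ns - 1 \<longrightarrow>
      orth_mat (ns ! j) (Q j) \<and> R j \<in> carrier_mat (red_widths ns ! j) (1 + red_widths ns ! (j - 1)) \<and>
      qrA ns p Q j = Q j * Inc (ns ! j) (red_widths ns ! j) * R j \<and>
      snd pr ! (j - 1) = col (R j) 0 \<and>
      fst pr ! (j - 1) = mat (red_widths ns ! j) (red_widths ns ! (j - 1)) (\<lambda>(r, c). R j $$ (r, Suc c))"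
    using assms(1) unfolding qr_outputs_def Let_def by blast
  from spec[OF this, of "Suc i"] assms(2) show ?thesis
    by (intro that[of "R (Suc i)"]) auto
qed

lemma qr_outputs_orth_layers:
  assumes "qr_outputs ns p Q pr"
  shows "orth_layers ns Q"
  unfolding orth_layers_def
proof (intro allI impI)
  fix j assume "j \<le> nlayers ns"
  then show "orth_mat (ns ! j) (Qext ns Q j)"
    using assms by (cases "j = 0 \<or> j = nlayers ns")
      (auto simp: Qext_def orth_mat_def qr_outputs_def Let_def)
qed

lemma qrA_Suc:
  assumes p: "p \<in> Param ns" and i: "i < nlayers ns"
  shows "qrA ns p Q (Suc i) = aug (snd p ! i) (fst p ! i * Qext ns Q i * Inc (ns ! i) (red_widths ns ! i))"
proof (cases i)
  case 0
  then show ?thesis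
    using ParamD(3)[OF p i] by (simp add: Qext_def red_widths_0 Inc_self)
qed (use i in \<open>simp add: Qext_def\<close>)

lemma qr_layer_middle:
  assumes qr: "qr_outputs ns p Q pr" and i: "Suc i < nlayers ns"
  shows "transpose_mat (Qext ns Q (Suc i)) * qrA ns p Q (Suc i)
           = Inc (ns ! Suc i) (red_widths ns ! Suc i) * aug (snd pr ! i) (fst pr ! i)"
    and "fst pr ! i \<in> carrier_mat (red_widths ns ! Suc i) (red_widths ns ! i)"
    and "snd pr ! i \<in> carrier_vec (red_widths ns ! Suc i)"
proof -
  let ?Qi = "Q (Suc i)" and ?I = "Inc (ns ! Suc i) (red_widths ns ! Suc i)"
  obtain R where Q: "orth_mat (ns ! Suc i) ?Qi"
    and R: "R \<in> carrier_mat (red_widths ns ! Suc i) (Suc (red_widths ns ! i))"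
    and A: "qrA ns p Q (Suc i) = ?Qi * ?I * R"
    and pr_i: "snd pr ! i = col R 0"
      "fst pr ! i = mat (red_widths ns ! Suc i) (red_widths ns ! i) (\<lambda>(r, c). R $$ (r, Suc c))"
    by (rule qr_outputs_middle[OF qr i])
  note Q' = orth_matD[OF Q]
  have "transpose_mat ?Qi * qrA ns p Q (Suc i) = transpose_mat ?Qi * (?Qi * ?I) * R"
    unfolding A by (rule assoc_mult_mat[symmetric]) (use Q' R in auto)
  also have "transpose_mat ?Qi * (?Qi * ?I) = (transpose_mat ?Qi * ?Qi) * ?I"
    by (rule assoc_mult_mat[symmetric]) (use Q' in auto)
  also have "\<dots> = ?I"
    using Q' by simp
  also have "R = aug (snd pr ! i) (fst pr ! i)"
    using R by (simp add: pr_i aug_col_0_tail)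
  finally show "transpose_mat (Qext ns Q (Suc i)) * qrA ns p Q (Suc i) = ?I * aug (snd pr ! i) (fst pr ! i)"
    using i by (simp add: Qext_def)
  show "fst pr ! i \<in> carrier_mat (red_widths ns ! Suc i) (red_widths ns ! i)"
    and "snd pr ! i \<in> carrier_vec (red_widths ns ! Suc i)"
    using R by (simp_all add: pr_i carrier_vecI)
qed

lemma qr_layer_last:
  assumes p: "p \<in> Param ns" and qr: "qr_outputs ns p Q pr" and L: "nlayers ns = Suc i"
  shows "transpose_mat (Qext ns Q (Suc i)) * qrA ns p Q (Suc i)
           = Inc (ns ! Suc i) (red_widths ns ! Suc i) * aug (snd pr ! i) (fst pr ! i)"
    and "fst pr ! i \<in> carrier_mat (red_widths ns ! Suc i) (red_widths ns ! i)"
    and "snd pr ! i \<in> carrier_vec (red_widths ns ! Suc i)"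
proof -
  let ?A = "qrA ns p Q (Suc i)"
  have i: "i < nlayers ns"
    using L by simp
  have "fst p ! i * Qext ns Q i * Inc (ns ! i) (red_widths ns ! i) \<in> carrier_mat (ns ! Suc i) (red_widths ns ! i)"
    using ParamD(3)[OF p i] Qext_carrier[OF qr_outputs_orth_layers[OF qr], of i] i by auto
  then have A: "?A \<in> carrier_mat (ns ! Suc i) (Suc (red_widths ns ! i))"
    by (simp add: qrA_Suc[OF p i] aug_carrier)
  have pr_i: "snd pr ! i = col ?A 0"
    "fst pr ! i = mat (ns ! Suc i) (red_widths ns ! i) (\<lambda>(r, c). ?A $$ (r, Suc c))"
    using qr A L by (simp_all add: qr_outputs_def Let_def)
  have "Qext ns Q (Suc i) = 1\<^sub>m (ns ! Suc i)" "red_widths ns ! Suc i = ns ! Suc i"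
    using L red_widths_last[of ns] by (simp_all add: Qext_def)
  then show "transpose_mat (Qext ns Q (Suc i)) * ?A
      = Inc (ns ! Suc i) (red_widths ns ! Suc i) * aug (snd pr ! i) (fst pr ! i)"
    and "fst pr ! i \<in> carrier_mat (red_widths ns ! Suc i) (red_widths ns ! i)"
    and "snd pr ! i \<in> carrier_vec (red_widths ns ! Suc i)"
    using A by (simp_all add: pr_i aug_col_0_tail Inc_self carrier_vecI)
qed

lemma qr_layer:
  assumes p: "p \<in> Param ns" and qr: "qr_outputs ns p Q pr" and i: "i < nlayers ns"
  shows "transpose_mat (Qext ns Q (Suc i)) * qrA ns p Q (Suc i)
           = Inc (ns ! Suc i) (red_widths ns ! Suc i) * aug (snd pr ! i) (fst pr ! i)"
    and "fst pr ! i \<in> carrier_mat (red_widths ns ! Suc i) (red_widths ns ! i)"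
    and "snd pr ! i \<in> carrier_vec (red_widths ns ! Suc i)"
  using qr_layer_middle[OF qr] qr_layer_last[OF p qr] i
  by (cases "Suc i < nlayers ns"; simp)+

lemma sandwich_mult_Inc_of_aug:
  fixes A W B V :: "real mat"
  assumes A: "A \<in> carrier_mat n n" and W: "W \<in> carrier_mat n m" and B: "B \<in> carrier_mat m m"
    and b: "b \<in> carrier_vec n" and V: "V \<in> carrier_mat k' k" and v: "v \<in> carrier_vec k'"
    and eq: "A * aug b (W * B * Inc m k) = Inc n k' * aug v V"
  shows "A * W * B * Inc m k = Inc n k' * V" and "A *\<^sub>v b = Inc n k' *\<^sub>v v"
proof -
  have WB: "W * B \<in> carrier_mat n m" and M: "W * B * Inc m k \<in> carrier_mat n k"
    using W B by auto
  have "aug (A *\<^sub>v b) (A * (W * B * Inc m k)) = aug (Inc n k' *\<^sub>v v) (Inc n k' * V)"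
    using eq mult_aug[OF A M b] mult_aug[OF Inc_carrier V v] by simp
  moreover have "A * (W * B * Inc m k) \<in> carrier_mat n k" "Inc n k' * V \<in> carrier_mat n k"
    using mult_carrier_mat[OF A M] mult_carrier_mat[OF Inc_carrier V] .
  moreover have "A *\<^sub>v b \<in> carrier_vec n" "Inc n k' *\<^sub>v v \<in> carrier_vec n"
    using A by (simp_all add: carrier_vecI)
  ultimately have weight: "A * (W * B * Inc m k) = Inc n k' * V" and bias: "A *\<^sub>v b = Inc n k' *\<^sub>v v"
    using aug_inject by metis+
  have "A * W * B * Inc m k = A * (W * B) * Inc m k"
    using A W B by (simp add: assoc_mult_mat[of A _ _ W _ B])
  also have "\<dots> = A * (W * B * Inc m k)"
    by (rule assoc_mult_mat[OF A WB Inc_carrier])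
  finally show "A * W * B * Inc m k = Inc n k' * V"
    using weight by simp
  show "A *\<^sub>v b = Inc n k' *\<^sub>v v"
    by (rule bias)
qed

lemma qr_outputs_restricts_to:
  assumes p: "p \<in> Param ns" and qr: "qr_outputs ns p Q pr"
  shows "restricts_to ns (act_inv ns Q p) pr"
proof -
  have Q: "orth_layers ns Q"
    by (rule qr_outputs_orth_layers[OF qr])
  have "pr \<in> Param (red_widths ns)"
    by (rule ParamI) (use qr qr_layer(2,3)[OF p qr] in \<open>auto simp: qr_outputs_def Let_def\<close>)
  then show ?thesis
    unfolding restricts_to_def
  proof (intro conjI allI impI act_inv_Param[OF Q p])
    fix i assume i: "i < nlayers ns"
    have Qt: "transpose_mat (Qext ns Q (Suc i)) \<in> carrier_mat (ns ! Suc i) (ns ! Suc i)"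
      using Qext_carrier[OF Q] i by auto
    note layer = sandwich_mult_Inc_of_aug[OF Qt ParamD(3)[OF p i] Qext_carrier[OF Q less_imp_le[OF i]] ParamD(4)[OF p i]
        qr_layer(2,3)[OF p qr i] qr_layer(1)[OF p qr i, unfolded qrA_Suc[OF p i]]]
    show "fst (act_inv ns Q p) ! i * Inc (ns ! i) (red_widths ns ! i)
        = Inc (ns ! Suc i) (red_widths ns ! Suc i) * fst pr ! i"
      and "snd (act_inv ns Q p) ! i = Inc (ns ! Suc i) (red_widths ns ! Suc i) *\<^sub>v snd pr ! i"
      using layer i by (simp_all add: nth_act_inv[OF p i])
  qed
qed

theorem theorem4:
  fixes ns :: "nat list" and h :: "nat \<Rightarrow> real \<Rightarrow> real"
    and D :: "(real vec \<times> real vec) list" and C :: "real vec \<Rightarrow> real vec \<Rightarrow> real"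
    and \<eta> :: real and p pr :: param and Q :: "nat \<Rightarrow> real mat"
  assumes "length ns \<ge> 2"
    and "\<forall>i. 1 \<le> i \<and> i \<le> nlayers ns \<longrightarrow> piecewise_differentiable (h i)"
    and "\<forall>(x, y) \<in> set D. x \<in> carrier_vec (ns ! 0) \<and> y \<in> carrier_vec (ns ! nlayers ns)"
    and "\<eta> > 0"
    and "differentiable_on_Param (loss h C D) ns"
    and "differentiable_on_Param (loss h C D) (red_widths ns)"
    and "p \<in> Param ns"
    and "qr_outputs ns p Q pr"
  shows "\<forall>k::nat.
     (gd_step (loss h C D) \<eta> ns ^^ k) p
       = act ns Q ((gd_step (loss h C D) \<eta> ns ^^ k) (act_inv ns Q p))
   \<and> (pgd_step (loss h C D) \<eta> ns ^^ k) (act_inv ns Q p)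
       = padd (embed ns ((gd_step (loss h C D) \<eta> (red_widths ns) ^^ k) pr))
              (psub (act_inv ns Q p) (embed ns pr))"
proof -
  let ?f = "loss h C D" and ?A = "act_inv ns Q p"
  have D: "\<forall>(x, y) \<in> set D. x \<in> carrier_vec (ns ! 0)"
    using assms(3) by auto
  have Q: "orth_layers ns Q"
    by (rule qr_outputs_orth_layers[OF assms(8)])
  have A: "restricts_to ns ?A pr"
    by (rule qr_outputs_restricts_to[OF assms(7,8)])
  have inv: "?f (act ns Q z) = ?f z" if "z \<in> Param ns" for z
    by (rule loss_act[OF Q that D])
  have gd: "(gd_step ?f \<eta> ns ^^ k) (act ns Q ?A) = act ns Q ((gd_step ?f \<eta> ns ^^ k) ?A)" for k
    by (rule funpow_gd_step_act[OF assms(5) Q act_inv_Param[OF Q assms(7)]]) (rule inv)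
  have pgd: "(pgd_step ?f \<eta> ns ^^ k) ?A
      = padd (embed ns ((gd_step ?f \<eta> (red_widths ns) ^^ k) pr)) (psub ?A (embed ns pr))" for k
  proof (induction k)
    case 0
    show ?case
      by (simp add: padd_embed_psub_embed[OF restricts_toD(1)[OF A]])
  next
    case (Suc k)
    then show ?case
      using pgd_step_padd_embed[OF restricts_to_psub_embed[OF A]
          funpow_gd_step_Param[OF assms(6) restricts_toD(2)[OF A]] assms(5,6) loss_restricts_to[OF _ D]]
      by simp
  qed
  show ?thesis
    using gd pgd by (simp add: act_act_inv[OF Q assms(7)])
qed

end
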